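(* Consider a discrete-time last-come-first-serve (LCFS) G/G/1 queue with preemptive service: update packets are generated according to a renewal process whose inter-generation times are i.i.d. positive-integer-valued random variables distributed as $X$, and packet service times are i.i.d. positive-integer-valued random variables distributed as $S$, independent of the generation process. A newly generated packet immediately enters service, preempting (and discarding) any packet currently in service. Assume $\mathbb{P}(S\le X)>0$, where $X$ and $S$ are independent. Then the peak and average age are $$A^{\mathrm{p}} = \frac{\mathbb{E}[X]}{\mathbb{P}(S\le X)} + \frac{\mathbb{E}[S\,\mathbb{1}_{\{S\le X\}}]}{\mathbb{P}(S\le X)} - 1,$$ and $$A^{\mathrm{ave}} = \frac{1}{2}\frac{\mathbb{E}[X^2]}{\mathbb{E}[X]} + \frac{\mathbb{E}[\min(X,S)]}{\mathbb{P}(S\le X)} - \frac{1}{2}.$$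
   Context: Time is slotted. Packets are generated (arrive) at the beginning of a time slot and finish service at the end of a time slot: a packet generated at the beginning of slot $Z$ with service time $S$ completes service at the end of slot $Z+S-1$ unless a new packet is generated at or before slot $Z+S-1$ (i.e., it completes iff its service time is at most the time until the next generation). The age process $A(t)$ is the age of information at the beginning of slot $t$; if the $i$th packet is generated at time $Y_i$, then $A(t+1)=A(t)+1$ if no packet completes service in slot $t$, and $A(t+1)=\min\{t-Y_i, A(t)\}+1$ if packet $i$ completes service in slot $t$. The peak age is $A^{\mathrm{p}}=\limsup_{T\to\infty}\frac{\sum_{t=1}^{T}A(t)\mathbb{1}_{\{A(t+1)\le A(t)\}}}{\sum_{t=1}^{T}\mathbb{1}_{\{A(t+1)\le A(t)\}}}$ and the average age is $A^{\mathrm{ave}}=\limsup_{T\to\infty}\frac{1}{T}\sum_{t=1}^{T}A(t)$. *)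

theory Defs
  imports "HOL-Probability.Probability"
begin

text \<open>Deterministic sample-path description of the slotted preemptive LCFS G/G/1 queue.
  xs i : inter-generation time between packet i and packet i+1 (i = 0,1,2,...)
  ss i : service time of packet i.
  Packet 0 is generated at the beginning of slot 1.\<close>

definition gen_time :: "(nat \<Rightarrow> nat) \<Rightarrow> nat \<Rightarrow> nat" where
  "gen_time xs i = 1 + (\<Sum>k<i. xs k)"

text \<open>Packet i completes service in slot t: its service time is at most the time
  until the next generation, and it finishes at the end of slot Y_i + S_i - 1.\<close>
definition completes_in :: "(nat \<Rightarrow> nat) \<Rightarrow> (nat \<Rightarrow> nat) \<Rightarrow> nat \<Rightarrow> nat \<Rightarrow> bool" where
  "completes_in xs ss i t \<longleftrightarrow> ss i \<le> xs i \<and> gen_time xs i + ss i - 1 = t"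

text \<open>Age at the beginning of slot t (slot 0 is a dummy with A(0)=0, so A(1)=1).\<close>
fun age :: "(nat \<Rightarrow> nat) \<Rightarrow> (nat \<Rightarrow> nat) \<Rightarrow> nat \<Rightarrow> nat" where
  "age xs ss 0 = 0"
| "age xs ss (Suc t) =
     (if \<exists>i. completes_in xs ss i t
      then min (t - gen_time xs (THE i. completes_in xs ss i t)) (age xs ss t) + 1
      else age xs ss t + 1)"

definition peak_ratio :: "(nat \<Rightarrow> nat) \<Rightarrow> (nat \<Rightarrow> nat) \<Rightarrow> nat \<Rightarrow> real" where
  "peak_ratio xs ss T =
     (\<Sum>t=1..T. if age xs ss (Suc t) \<le> age xs ss t then real (age xs ss t) else 0) /
     (\<Sum>t=1..T. if age xs ss (Suc t) \<le> age xs ss t then 1 else 0)"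

definition peak_age :: "(nat \<Rightarrow> nat) \<Rightarrow> (nat \<Rightarrow> nat) \<Rightarrow> ereal" where
  "peak_age xs ss = limsup (\<lambda>T. ereal (peak_ratio xs ss T))"

definition average_age :: "(nat \<Rightarrow> nat) \<Rightarrow> (nat \<Rightarrow> nat) \<Rightarrow> ereal" where
  "average_age xs ss = limsup (\<lambda>T. ereal ((\<Sum>t=1..T. real (age xs ss t)) / real T))"

end

(* On a fixed sample path the age at slot t is t minus the generation time of the freshest packet
   delivered before t. Peaks occur exactly at deliveries and telescope: up to the delivery of packet l
   they sum to Y_l plus the service times of the delivered packets minus their number. The strong law
   applied to X, [S <= X] and S [S <= X] then gives the peak age.

   Between the generations of packets n and n+1 the age grows by one per slot, starting from a_n, the
   age at generation n, and falls to the time elapsed since generation n when packet n is delivered.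
   The area of this block is X_n (X_n - 1)/2 + a_n min(X_n, S_n), and a_(n+1) = X_n + a_n [S_n > X_n].
   Since a_n depends only on earlier packets, the increments a_n (F(X_n, S_n) - E F) are orthogonal with
   bounded variance, so the averages of a_n F(X_n, S_n) and of a_n E F have the same limit. For
   F = [S <= X] the weighted sum telescopes, giving (1/N) sum a_n -> E X / P(S <= X); for F = min(X, S)
   this yields the average block area, and dividing by the mean block length E X gives the average age.

   All laws of large numbers only need pairwise independence: they follow Etemadi's argument, i.e.
   second-moment bounds along geometric subsequences and interpolation by monotonicity. *)

theory Submission
  imports Defs
begin

section \<open>Averages of sequences and of random variables\<close>

lemma sum_lessThan_real_of_nat: "(\<Sum>d<x. real d) = real x * (real x - 1) / 2"
  by (induction x) (auto simp: field_simps)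

lemma LIMSEQ_Suc_over_n:
  fixes f :: "nat \<Rightarrow> real"
  assumes "(\<lambda>n. f n / real n) \<longlonglongrightarrow> L"
  shows "(\<lambda>n. f (Suc n) / real n) \<longlonglongrightarrow> L"
proof -
  have "(\<lambda>n. f (Suc n) / real (Suc n) * (real (Suc n) / real n)) \<longlonglongrightarrow> L * 1"
    by (intro tendsto_mult LIMSEQ_Suc[OF assms] LIMSEQ_Suc_n_over_n)
  then show ?thesis by simp
qed

lemma limsup_ereal_eq_of_tendsto: "f \<longlonglongrightarrow> L \<Longrightarrow> limsup (\<lambda>n. ereal (f n)) = ereal L"
  by (rule lim_imp_Limsup[OF trivial_limit_sequentially]) (rule tendsto_ereal)

lemma cesaro_mean_tendsto_zero:
  fixes d :: "nat \<Rightarrow> real"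
  assumes d: "d \<longlonglongrightarrow> 0"
  shows "(\<lambda>n. (\<Sum>k<n. d k) / real n) \<longlonglongrightarrow> 0"
  unfolding tendsto_iff
proof (intro allI impI)
  fix r :: real assume r: "r > 0"
  then obtain N0 where N0: "\<And>k. k \<ge> N0 \<Longrightarrow> \<bar>d k\<bar> < r / 2"
    using d unfolding tendsto_iff eventually_sequentially
    by (metis dist_real_def diff_zero half_gt_zero)
  define C where "C = (\<Sum>k<N0. \<bar>d k\<bar>)"
  obtain N1 :: nat where N1: "2 * C / r < real N1" using reals_Archimedean2 by blast
  show "\<forall>\<^sub>F n in sequentially. dist ((\<Sum>k<n. d k) / real n) 0 < r"
    unfolding eventually_sequentially
  proof (intro exI[of _ "N0 + N1 + 1"] allI impI)
    fix n assume n: "N0 + N1 + 1 \<le> n"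
    have split: "(\<Sum>k<n. d k) = (\<Sum>k<N0. d k) + (\<Sum>k\<in>{N0..<n}. d k)"
      using sum.atLeastLessThan_concat[of 0 N0 n d] n by (simp add: lessThan_atLeast0)
    have "\<bar>\<Sum>k<N0. d k\<bar> \<le> C" unfolding C_def by (rule sum_abs)
    moreover have "\<bar>\<Sum>k\<in>{N0..<n}. d k\<bar> \<le> real n * (r / 2)"
    proof -
      have "\<bar>\<Sum>k\<in>{N0..<n}. d k\<bar> \<le> (\<Sum>k\<in>{N0..<n}. r / 2)"
        by (rule order_trans[OF sum_abs sum_mono]) (use N0 in \<open>auto intro: less_imp_le\<close>)
      also have "\<dots> = real (n - N0) * (r / 2)" by simp
      also have "\<dots> \<le> real n * (r / 2)" using r by (intro mult_right_mono) auto
      finally show ?thesis .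
    qed
    moreover have "C < real n * (r / 2)"
    proof -
      have "2 * C < r * real N1" using N1 r by (simp add: field_simps)
      also have "\<dots> \<le> r * real n" using r n by (intro mult_left_mono) auto
      finally show ?thesis by (simp add: algebra_simps)
    qed
    ultimately have "\<bar>\<Sum>k<n. d k\<bar> < real n * r" unfolding split by linarith
    then show "dist ((\<Sum>k<n. d k) / real n) 0 < r"
      using n by (simp add: abs_divide field_simps)
  qed
qed

lemma cesaro_mean_tendsto:
  fixes e :: "nat \<Rightarrow> real"
  assumes "e \<longlonglongrightarrow> \<mu>"
  shows "(\<lambda>n. (\<Sum>k<n. e k) / real n) \<longlonglongrightarrow> \<mu>"
proof -
  have "(\<lambda>k. e k - \<mu>) \<longlonglongrightarrow> 0" using tendsto_diff[OF assms tendsto_const[of \<mu>]] by simp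
  then have "(\<lambda>n. (\<Sum>k<n. e k - \<mu>) / real n + \<mu>) \<longlonglongrightarrow> 0 + \<mu>"
    by (intro tendsto_intros cesaro_mean_tendsto_zero)
  moreover have "(\<Sum>k<n. e k - \<mu>) / real n + \<mu> = (\<Sum>k<n. e k) / real n" if "n > 0" for n
    using that by (simp add: sum_subtractf field_simps)
  ultimately show ?thesis
    by (auto intro: Lim_transform_eventually eventually_mono[OF eventually_gt_at_top[of 0]])
qed

lemma sum_inverse_squares_tail_le:
  assumes "1 \<le> y"
  shows "(\<Sum>k\<in>{y..<N}. 1 / (real k + 1)\<^sup>2) \<le> 1 / real y"
proof -
  have "(\<Sum>k\<in>{y..<N}. 1 / (real k + 1)\<^sup>2) \<le> 1 / real y - 1 / real N" if "y \<le> N" for N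
    using that
  proof (induction N rule: dec_induct)
    case (step N)
    have N1: "real N \<ge> 1" using step assms by simp
    have "1 / (real N + 1)\<^sup>2 \<le> 1 / (real N * (real N + 1))"
      using N1 by (intro divide_left_mono) (auto simp: power2_eq_square intro!: mult_right_mono)
    also have "\<dots> = 1 / real N - 1 / real (Suc N)" using N1 by (simp add: field_simps)
    finally show ?case using step by (simp add: sum.atLeastLessThan_Suc)
  qed simp
  then show ?thesis
    by (cases "y \<le> N") (fastforce intro: order_trans[of _ "1 / real y - 1 / real N"])+
qed

lemma mono_nat_bracket:
  fixes f :: "nat \<Rightarrow> nat"
  assumes "mono f" "f J \<le> n" "n < f m"
  obtains j where "J \<le> j" "f j \<le> n" "n < f (Suc j)"
proof -
  define i where "i = (LEAST i. n < f i)"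
  have fi: "n < f i" unfolding i_def using assms(3) by (rule LeastI)
  have below: "f i' \<le> n" if "i' < i" for i'
    using not_less_Least[OF that[unfolded i_def]] unfolding i_def by (simp add: not_less)
  have "J < i"
    using fi assms(1,2) monoD[OF assms(1), of i J] by (cases "i \<le> J") auto
  then obtain j where "i = Suc j" "J \<le> j" by (cases i) auto
  then show thesis using that below fi by simp
qed

lemma mono_ratio_bounds_between:
  fixes s :: "nat \<Rightarrow> real"
  assumes mono: "mono s" and nonneg: "\<And>n. 0 \<le> s n"
    and n: "k \<le> n" "n < k'" and k: "1 \<le> k" and ratio: "real k' \<le> c * real k" and c: "1 \<le> c"
    and near: "\<bar>s k / real k - L\<bar> < \<eta>" "\<bar>s k' / real k' - L\<bar> < \<eta>"
  shows "(L - \<eta>) / c \<le> s n / real n \<and> s n / real n \<le> c * (L + \<eta>)"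
proof
  have n0: "0 < real n" and k': "1 \<le> real k'" using n k by simp_all
  have "s n \<le> s k'" using mono n(2) by (simp add: monoD)
  also have "\<dots> \<le> (L + \<eta>) * real k'" using near(2) k' by (simp add: abs_less_iff field_simps)
  also have "\<dots> \<le> (L + \<eta>) * (c * real n)"
  proof (rule mult_left_mono)
    have "c * real k \<le> c * real n" using n(1) c by (intro mult_left_mono) auto
    then show "real k' \<le> c * real n" using ratio by linarith
    have "0 \<le> s k' / real k'" using nonneg[of k'] k' by simp
    then show "0 \<le> L + \<eta>" using near(2) by linarith
  qed
  finally show "s n / real n \<le> c * (L + \<eta>)" using n0 by (simp add: field_simps)
  show "(L - \<eta>) / c \<le> s n / real n"
  proof (cases "0 \<le> L - \<eta>")
    case True
    have "(L - \<eta>) * real n \<le> (L - \<eta>) * (c * real k)"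
      using n(2) ratio True by (intro mult_left_mono) auto
    also have "\<dots> = c * ((L - \<eta>) * real k)" by (simp add: mult_ac)
    also have "\<dots> \<le> c * s k"
      using near(1) k c by (intro mult_left_mono) (auto simp: abs_less_iff field_simps)
    also have "\<dots> \<le> c * s n" using mono n(1) c by (intro mult_left_mono) (auto simp: monoD)
    finally show ?thesis using n0 c by (simp add: field_simps)
  next
    case False
    then have "(L - \<eta>) / c \<le> 0" using c by (simp add: divide_nonpos_pos)
    also have "0 \<le> s n / real n" using nonneg[of n] by simp
    finally show ?thesis .
  qed
qed

lemma sum_power_atLeastLessThan_le:
  fixes \<beta> :: real
  assumes "0 \<le> \<beta>" "\<beta> < 1"
  shows "(\<Sum>j\<in>{j0..<J}. \<beta> ^ j) \<le> \<beta> ^ j0 / (1 - \<beta>)"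
proof (cases "j0 \<le> J")
  case True
  have "(\<Sum>j\<in>{j0..<J}. \<beta> ^ j) = \<beta> ^ j0 * (\<Sum>i<J - j0. \<beta> ^ i)"
    using True sum.shift_bounds_nat_ivl[of "\<lambda>j. \<beta> ^ j" 0 j0 "J - j0"]
    by (simp add: power_add sum_distrib_left atLeast0LessThan mult.commute)
  also have "\<dots> = \<beta> ^ j0 * ((1 - \<beta> ^ (J - j0)) / (1 - \<beta>))"
    using assms by (subst sum_gp_strict) auto
  also have "\<dots> \<le> \<beta> ^ j0 * (1 / (1 - \<beta>))"
    using assms by (intro mult_left_mono divide_right_mono) auto
  finally show ?thesis by simp
qed (use assms in simp)

definition geom_floor :: "real \<Rightarrow> nat \<Rightarrow> nat" where
  "geom_floor a j = nat \<lfloor>a ^ j\<rfloor>"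

context
  fixes a :: real
  assumes a: "a > 1"
begin

lemma real_geom_floor: "real (geom_floor a j) = of_int \<lfloor>a ^ j\<rfloor>"
  unfolding geom_floor_def using one_le_power[of a j] a by (simp add: of_nat_nat)

lemma geom_floor_le: "real (geom_floor a j) \<le> a ^ j"
  using real_geom_floor by simp

lemma geom_floor_gt: "a ^ j - 1 < real (geom_floor a j)"
  using real_geom_floor[of j] floor_correct[of "a ^ j"] by linarith

lemma geom_floor_ge_1: "1 \<le> geom_floor a j"
  unfolding geom_floor_def using one_le_power[of a j] a by (simp add: le_nat_iff)

lemma mono_geom_floor: "mono (geom_floor a)"
  unfolding geom_floor_def using a by (intro monoI nat_mono floor_mono power_increasing) auto

lemma filterlim_geom_floor: "filterlim (geom_floor a) at_top sequentially"
  unfolding filterlim_at_top eventually_sequentially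
proof
  fix n :: nat
  obtain j where "real n + 1 < a ^ j" using real_arch_pow[OF a] by blast
  then have "n < geom_floor a j" using geom_floor_gt[of j] by simp
  then show "\<exists>j. \<forall>i\<ge>j. n \<le> geom_floor a i"
    using monoD[OF mono_geom_floor] by (meson less_imp_le_nat order_trans)
qed

lemma geom_floor_Suc_le: "\<exists>J. \<forall>j\<ge>J. real (geom_floor a (Suc j)) \<le> a\<^sup>2 * real (geom_floor a j)"
proof -
  obtain J where J: "a / (a - 1) < a ^ J" using real_arch_pow[OF a] by blast
  have "real (geom_floor a (Suc j)) \<le> a\<^sup>2 * real (geom_floor a j)" if j: "J \<le> j" for j
  proof -
    have "a ^ J \<le> a ^ j" using a j by (intro power_increasing) auto
    then have "a / (a - 1) < a ^ j" using J by simp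
    then have "a * a \<le> a * (a ^ j * (a - 1))" using a
      by (intro mult_left_mono) (auto simp: field_simps)
    then have "a ^ Suc j \<le> a\<^sup>2 * (a ^ j - 1)" by (simp add: algebra_simps power2_eq_square)
    also have "\<dots> \<le> a\<^sup>2 * real (geom_floor a j)"
      using geom_floor_gt[of j] by (intro mult_left_mono) auto
    finally show ?thesis using geom_floor_le[of "Suc j"] by linarith
  qed
  then show ?thesis by blast
qed

lemma inverse_geom_floor_le: "1 / real (geom_floor a j) \<le> 2 * (1 / a) ^ j"
proof -
  have k1: "1 \<le> real (geom_floor a j)" using geom_floor_ge_1[of j] by simp
  have "a ^ j \<le> 2 * real (geom_floor a j)" using geom_floor_gt[of j] k1 by simp
  then have "1 / (2 * real (geom_floor a j)) \<le> 1 / a ^ j"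
    using a k1 by (intro divide_left_mono) auto
  then show ?thesis by (simp add: power_one_over field_simps)
qed

lemma sum_inverse_sq_geom_floor_le:
  "(\<Sum>j<J. if k < geom_floor a j then 1 / (real (geom_floor a j))\<^sup>2 else 0)
     \<le> (4 / (1 - 1 / a\<^sup>2)) / (real k + 1)\<^sup>2"
proof -
  define \<beta> where "\<beta> = 1 / a\<^sup>2"
  have \<beta>0: "0 < \<beta>" and \<beta>1: "\<beta> < 1" using a by (auto simp: \<beta>_def)
  define F where "F = {j\<in>{..<J}. k < geom_floor a j}"
  have "(\<Sum>j<J. if k < geom_floor a j then 1 / (real (geom_floor a j))\<^sup>2 else 0)
      = (\<Sum>j\<in>F. 1 / (real (geom_floor a j))\<^sup>2)"
    unfolding F_def by (rule sum.inter_filter[symmetric]) simp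
  also have "\<dots> \<le> (4 / (1 - \<beta>)) / (real k + 1)\<^sup>2"
  proof (cases "F = {}")
    case False
    define j0 where "j0 = Min F"
    have fin: "finite F" by (simp add: F_def)
    have j0F: "j0 \<in> F" and j0le: "\<And>j. j \<in> F \<Longrightarrow> j0 \<le> j"
      using fin False by (simp_all add: j0_def)
    have "real k + 1 \<le> a ^ j0"
      using j0F geom_floor_le[of j0] by (simp add: F_def)
    then have "(real k + 1)\<^sup>2 \<le> (a ^ j0)\<^sup>2" by (intro power_mono) auto
    then have bj0: "\<beta> ^ j0 \<le> 1 / (real k + 1)\<^sup>2"
      using a by (simp add: \<beta>_def power_one_over field_simps flip: power_mult power_even_eq)
    have "(\<Sum>j\<in>F. 1 / (real (geom_floor a j))\<^sup>2) \<le> (\<Sum>j\<in>F. 4 * \<beta> ^ j)"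
    proof (intro sum_mono)
      fix j
      have "(1 / real (geom_floor a j))\<^sup>2 \<le> (2 * (1 / a) ^ j)\<^sup>2"
        by (intro power_mono inverse_geom_floor_le) simp
      then show "1 / (real (geom_floor a j))\<^sup>2 \<le> 4 * \<beta> ^ j"
        by (simp add: \<beta>_def power_mult_distrib power_divide flip: power_mult power_even_eq)
           (metis mult.commute)
    qed
    also have "\<dots> \<le> 4 * (\<Sum>j\<in>{j0..<J}. \<beta> ^ j)"
      using j0le \<beta>0 by (auto simp: sum_distrib_left F_def intro!: sum_mono2)
    also have "\<dots> \<le> 4 * (\<beta> ^ j0 / (1 - \<beta>))"
      using sum_power_atLeastLessThan_le[of \<beta> j0 J] \<beta>0 \<beta>1 by simp
    also have "\<dots> \<le> 4 * ((1 / (real k + 1)\<^sup>2) / (1 - \<beta>))"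
      using bj0 \<beta>1 by (intro mult_left_mono divide_right_mono) auto
    finally show ?thesis by (simp add: mult.commute)
  qed (use \<beta>1 in simp)
  finally show ?thesis by (simp add: \<beta>_def)
qed

lemma mono_ratio_bounds_along_geom_floor:
  fixes s :: "nat \<Rightarrow> real"
  assumes mono: "mono s" and nonneg: "\<And>n. 0 \<le> s n" and \<eta>: "\<eta> > 0"
    and lim: "(\<lambda>j. s (geom_floor a j) / real (geom_floor a j)) \<longlonglongrightarrow> L"
  shows "\<forall>\<^sub>F n in sequentially. (L - \<eta>) / a\<^sup>2 \<le> s n / real n \<and> s n / real n \<le> a\<^sup>2 * (L + \<eta>)"
proof -
  obtain J1 where J1: "\<And>j. j \<ge> J1 \<Longrightarrow> \<bar>s (geom_floor a j) / real (geom_floor a j) - L\<bar> < \<eta>"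
    using lim \<eta> unfolding LIMSEQ_def dist_real_def by blast
  obtain J2 where J2: "\<And>j. j \<ge> J2 \<Longrightarrow> real (geom_floor a (Suc j)) \<le> a\<^sup>2 * real (geom_floor a j)"
    using geom_floor_Suc_le by blast
  have "(L - \<eta>) / a\<^sup>2 \<le> s n / real n \<and> s n / real n \<le> a\<^sup>2 * (L + \<eta>)"
    if n: "geom_floor a (max J1 J2) \<le> n" for n
  proof -
    have "\<forall>\<^sub>F j in sequentially. Suc n \<le> geom_floor a j"
      using filterlim_geom_floor unfolding filterlim_at_top by blast
    then obtain m where "n < geom_floor a m"
      unfolding eventually_sequentially by (meson Suc_le_eq order_refl)
    then obtain j where j: "max J1 J2 \<le> j" "geom_floor a j \<le> n" "n < geom_floor a (Suc j)"
      using mono_nat_bracket[OF mono_geom_floor n] by blast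
    show ?thesis
    proof (rule mono_ratio_bounds_between[OF mono nonneg j(2,3)])
      show "1 \<le> geom_floor a j" by (rule geom_floor_ge_1)
      show "real (geom_floor a (Suc j)) \<le> a\<^sup>2 * real (geom_floor a j)" using J2 j(1) by simp
      show "1 \<le> a\<^sup>2" using a by (simp add: one_le_power)
    qed (use J1 j(1) in simp_all)
  qed
  then show ?thesis unfolding eventually_sequentially by blast
qed

end

lemma one_plus_inverse_sq_le: "(1 + 1 / real (Suc m))\<^sup>2 \<le> 1 + 3 / real (Suc m)"
proof -
  have "1 / real (Suc m) * (1 / real (Suc m)) \<le> 1 / real (Suc m)"
    by (intro mult_left_le) auto
  then show ?thesis by (simp add: power2_eq_square algebra_simps)
qed

lemma close_of_ratio_bounds:
  fixes L \<epsilon> c \<theta> x :: real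
  assumes "0 \<le> L" "0 < \<epsilon>" "1 \<le> c" "c \<le> 1 + \<theta>" "0 < \<theta>" "\<theta> * (L + \<epsilon>) = \<epsilon> / 3"
    and bounds: "(L - \<epsilon> / 3) / c \<le> x \<and> x \<le> c * (L + \<epsilon> / 3)"
  shows "\<bar>x - L\<bar> < \<epsilon>"
proof -
  have "c * (L + \<epsilon> / 3) \<le> (1 + \<theta>) * (L + \<epsilon> / 3)"
    using assms by (intro mult_right_mono) auto
  also have "\<dots> \<le> L + \<epsilon> / 3 + \<theta> * (L + \<epsilon>)"
    using assms by (simp add: algebra_simps)
  finally have up: "x < L + \<epsilon>" using assms by linarith
  have "1 - \<theta> \<le> 1 / (1 + \<theta>)" using assms by (simp add: field_simps)
  also have "\<dots> \<le> 1 / c" using assms by (intro divide_left_mono) (auto intro!: mult_pos_pos)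
  finally have "L * (1 - \<theta>) \<le> L * (1 / c)" using assms by (intro mult_left_mono)
  then have A: "L - \<theta> * L \<le> L / c" by (simp add: algebra_simps)
  have B: "\<epsilon> / 3 / c \<le> \<epsilon> / 3" using assms by (simp add: divide_le_eq)
  have "\<theta> * L + \<theta> * \<epsilon> = \<epsilon> / 3" using assms(6) by (simp add: distrib_left)
  moreover have "0 < \<theta> * \<epsilon>" using assms by simp
  ultimately have C: "\<theta> * L \<le> \<epsilon> / 3" by linarith
  have "L / c - \<epsilon> / 3 / c \<le> x" using bounds by (simp add: diff_divide_distrib)
  then have low: "L - \<epsilon> < x" using A B C assms(2) by linarith
  show ?thesis using up low by simp
qed

lemma mono_ratio_tendsto_of_geom_floor:
  fixes s :: "nat \<Rightarrow> real"
  assumes mono: "mono s" and nonneg: "\<And>n. 0 \<le> s n"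
    and lim: "\<And>m. (\<lambda>j. s (geom_floor (1 + 1 / real (Suc m)) j)
                        / real (geom_floor (1 + 1 / real (Suc m)) j)) \<longlonglongrightarrow> L"
  shows "(\<lambda>n. s n / real n) \<longlonglongrightarrow> L"
  unfolding tendsto_iff dist_real_def
proof (intro allI impI)
  fix \<epsilon> :: real assume \<epsilon>: "\<epsilon> > 0"
  have L0: "0 \<le> L"
    using lim[of 0] by (rule LIMSEQ_le_const) (auto intro!: exI[of _ 0] divide_nonneg_nonneg nonneg)
  define \<theta> where "\<theta> = \<epsilon> / (3 * (L + \<epsilon>))"
  have \<theta>: "\<theta> > 0" and \<theta>L: "\<theta> * (L + \<epsilon>) = \<epsilon> / 3"
    using \<epsilon> L0 by (simp_all add: \<theta>_def field_simps)
  obtain m :: nat where m: "3 / \<theta> < real m" using reals_Archimedean2 by blast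
  define a where "a = 1 + 1 / real (Suc m)"
  have a1: "a > 1" by (simp add: a_def)
  have a2: "a\<^sup>2 \<le> 1 + \<theta>"
  proof -
    have "3 / real (Suc m) \<le> \<theta>" using m \<theta> by (simp add: field_simps)
    then show ?thesis using one_plus_inverse_sq_le[of m] by (simp add: a_def)
  qed
  have a2_ge: "1 \<le> a\<^sup>2" using a1 by (simp add: one_le_power)
  have "\<forall>\<^sub>F n in sequentially. (L - \<epsilon> / 3) / a\<^sup>2 \<le> s n / real n \<and> s n / real n \<le> a\<^sup>2 * (L + \<epsilon> / 3)"
    using mono_ratio_bounds_along_geom_floor[OF a1 mono nonneg] \<epsilon> lim[of m] by (simp add: a_def)
  then show "\<forall>\<^sub>F n in sequentially. \<bar>s n / real n - L\<bar> < \<epsilon>"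
    by (rule eventually_mono) (use close_of_ratio_bounds[OF L0 \<epsilon> a2_ge a2 \<theta> \<theta>L] in blast)
qed

lemma integrable_mult_of_square_integrable:
  fixes f g :: "'a \<Rightarrow> real"
  assumes [measurable]: "f \<in> borel_measurable M" "g \<in> borel_measurable M"
    and "integrable M (\<lambda>x. (f x)\<^sup>2)" "integrable M (\<lambda>x. (g x)\<^sup>2)"
  shows "integrable M (\<lambda>x. f x * g x)"
proof (rule Bochner_Integration.integrable_bound)
  show "integrable M (\<lambda>x. ((f x)\<^sup>2 + (g x)\<^sup>2) / 2)" using assms(3,4) by simp
  have "\<bar>f x * g x\<bar> \<le> ((f x)\<^sup>2 + (g x)\<^sup>2) / 2" for x
    using sum_squares_bound[of "\<bar>f x\<bar>" "\<bar>g x\<bar>"] by (simp add: abs_mult)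
  then show "AE x in M. norm (f x * g x) \<le> norm (((f x)\<^sup>2 + (g x)\<^sup>2) / 2)" by simp
qed simp

lemma integral_sum_sq_of_orthogonal:
  fixes f :: "nat \<Rightarrow> 'a \<Rightarrow> real"
  assumes int: "\<And>i j. integrable M (\<lambda>\<omega>. f i \<omega> * f j \<omega>)"
    and orth: "\<And>i j. i \<noteq> j \<Longrightarrow> (\<integral>\<omega>. f i \<omega> * f j \<omega> \<partial>M) = 0"
  shows "integrable M (\<lambda>\<omega>. (\<Sum>k<n. f k \<omega>)\<^sup>2)"
    and "(\<integral>\<omega>. (\<Sum>k<n. f k \<omega>)\<^sup>2 \<partial>M) = (\<Sum>k<n. \<integral>\<omega>. (f k \<omega>)\<^sup>2 \<partial>M)"
proof -
  have sq: "(\<lambda>\<omega>. (\<Sum>k<n. f k \<omega>)\<^sup>2) = (\<lambda>\<omega>. \<Sum>i<n. \<Sum>j<n. f i \<omega> * f j \<omega>)"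
    by (auto simp: power2_eq_square sum_product)
  show "integrable M (\<lambda>\<omega>. (\<Sum>k<n. f k \<omega>)\<^sup>2)"
    unfolding sq using int by (intro Bochner_Integration.integrable_sum)
  have "(\<integral>\<omega>. (\<Sum>k<n. f k \<omega>)\<^sup>2 \<partial>M) = (\<Sum>i<n. \<Sum>j<n. \<integral>\<omega>. f i \<omega> * f j \<omega> \<partial>M)"
    unfolding sq using int
    by (simp add: Bochner_Integration.integral_sum Bochner_Integration.integrable_sum)
  also have "\<dots> = (\<Sum>i<n. \<Sum>j<n. if j = i then \<integral>\<omega>. (f i \<omega>)\<^sup>2 \<partial>M else 0)"
    using orth by (intro sum.cong refl) (auto simp: power2_eq_square)
  also have "\<dots> = (\<Sum>k<n. \<integral>\<omega>. (f k \<omega>)\<^sup>2 \<partial>M)" by simp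
  finally show "(\<integral>\<omega>. (\<Sum>k<n. f k \<omega>)\<^sup>2 \<partial>M) = (\<Sum>k<n. \<integral>\<omega>. (f k \<omega>)\<^sup>2 \<partial>M)" .
qed

lemma (in finite_measure) AE_tendsto_zero_of_summable_second_moments:
  fixes W :: "nat \<Rightarrow> 'a \<Rightarrow> real"
  assumes meas[measurable]: "\<And>j. W j \<in> borel_measurable M"
    and int: "\<And>j. integrable M (\<lambda>\<omega>. W j \<omega> ^ 2)"
    and bound: "\<And>j. (\<integral>\<omega>. W j \<omega> ^ 2 \<partial>M) \<le> g j" and summ: "summable g"
  shows "AE \<omega> in M. (\<lambda>j. W j \<omega>) \<longlonglongrightarrow> 0"
proof -
  have "summable (\<lambda>j. \<integral>\<omega>. W j \<omega> ^ 2 \<partial>M)"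
  proof (rule summable_comparison_test'[OF summ])
    show "norm (\<integral>\<omega>. W j \<omega> ^ 2 \<partial>M) \<le> g j" for j
      using bound[of j] integral_nonneg_AE[of "\<lambda>\<omega>. W j \<omega> ^ 2" M] by simp
  qed
  have "AE \<omega> in M. \<forall>\<^sub>F j in sequentially. \<bar>W j \<omega>\<bar> < 1 / real (Suc i)" for i
  proof -
    define A where "A j = {\<omega>\<in>space M. 1 / real (Suc i) \<le> \<bar>W j \<omega>\<bar>}" for j
    have [measurable]: "A j \<in> sets M" for j unfolding A_def by measurable
    have "measure M (A j) \<le> (\<integral>\<omega>. W j \<omega> ^ 2 \<partial>M) / (1 / real (Suc i))\<^sup>2" for j
      unfolding A_def using int by (intro second_moment_method) auto
    then have "summable (\<lambda>j. measure M (A j))"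
      by (intro summable_comparison_test[OF _
          summable_divide[OF \<open>summable (\<lambda>j. \<integral>\<omega>. W j \<omega> ^ 2 \<partial>M)\<close>]]) auto
    then have "AE \<omega> in M. \<forall>\<^sub>F j in sequentially. \<omega> \<in> space M - A j"
      by (intro borel_cantelli_AE1) (auto simp: emeasure_eq_measure)
    then show ?thesis by (rule eventually_mono) (auto simp: A_def elim!: eventually_mono)
  qed
  then have "AE \<omega> in M. \<forall>i. \<forall>\<^sub>F j in sequentially. \<bar>W j \<omega>\<bar> < 1 / real (Suc i)"
    by (subst AE_all_countable) auto
  then show ?thesis
  proof (rule eventually_mono)
    fix \<omega> assume small: "\<forall>i. \<forall>\<^sub>F j in sequentially. \<bar>W j \<omega>\<bar> < 1 / real (Suc i)"
    show "(\<lambda>j. W j \<omega>) \<longlonglongrightarrow> 0"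
      unfolding tendsto_iff
    proof (intro allI impI)
      fix r :: real assume "r > 0"
      then obtain i where i: "1 / real (Suc i) < r" by (rule nat_approx_posE)
      show "\<forall>\<^sub>F j in sequentially. dist (W j \<omega>) 0 < r"
        using small[rule_format, of i] by (rule eventually_mono) (use i in auto)
    qed
  qed
qed

section \<open>The age process on a fixed sample path\<close>

text \<open>The age at the beginning of the slot in which packet n is generated.\<close>
fun gen_age :: "(nat \<Rightarrow> nat) \<Rightarrow> (nat \<Rightarrow> nat) \<Rightarrow> nat \<Rightarrow> nat" where
  "gen_age xs ss 0 = 1"
| "gen_age xs ss (Suc n) = xs n + (if ss n \<le> xs n then 0 else gen_age xs ss n)"

locale sample_path =
  fixes xs ss :: "nat \<Rightarrow> nat"
  assumes xs_pos: "\<And>k. 1 \<le> xs k" and ss_pos: "\<And>k. 1 \<le> ss k"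
begin

abbreviation Y where "Y \<equiv> gen_time xs"
definition finish_time where "finish_time i = gen_time xs i + ss i - 1"
abbreviation delivered where "delivered i \<equiv> ss i \<le> xs i"

definition freshest_gen where
  "freshest_gen t = Max (insert 0 (Y ` {i. delivered i \<and> finish_time i < t}))"

lemma Y_Suc: "Y (Suc i) = Y i + xs i"
  by (simp add: gen_time_def)

lemma Suc_le_Y: "i + 1 \<le> Y i"
proof (induction i)
  case 0 then show ?case by (simp add: gen_time_def)
next
  case (Suc i) then show ?case using Y_Suc[of i] xs_pos[of i] by simp
qed

lemma Y_Suc_le: "i < j \<Longrightarrow> Y (Suc i) \<le> Y j"
proof (induction j)
  case 0 then show ?case by simp
next
  case (Suc j)
  then show ?case using Y_Suc[of j] by (cases "i = j") auto
qed

lemma Y_strict_mono: "i < j \<Longrightarrow> Y i < Y j"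
  using Y_Suc_le[of i j] Y_Suc[of i] xs_pos[of i] by simp

lemma Y_mono: "i \<le> j \<Longrightarrow> Y i \<le> Y j"
  using Y_strict_mono[of i j] by (cases "i = j") auto

lemma Y_ge_1: "1 \<le> Y i" using Suc_le_Y[of i] by simp

lemma Y_le_finish_time: "Y i \<le> finish_time i"
  using ss_pos[of i] by (simp add: finish_time_def)

lemma finish_time_less_Y_Suc: "delivered i \<Longrightarrow> finish_time i < Y (Suc i)"
  using ss_pos[of i] Y_Suc[of i] Y_ge_1[of i] by (simp add: finish_time_def)

lemma finish_time_less_imp_less: "delivered i \<Longrightarrow> delivered j \<Longrightarrow> finish_time i < finish_time j \<Longrightarrow> i < j"
proof (rule ccontr)
  assume a: "delivered i" "delivered j" "finish_time i < finish_time j" "\<not> i < j"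
  then have "j < i" using a by (cases "i = j") auto
  then have "finish_time j < Y i" using finish_time_less_Y_Suc[of j] Y_Suc_le[of j i] a by simp
  then show False using Y_le_finish_time[of i] a by simp
qed

lemma finish_time_mono: "delivered i \<Longrightarrow> delivered j \<Longrightarrow> i \<le> j \<Longrightarrow> finish_time i \<le> finish_time j"
  using finish_time_less_imp_less[of j i] by (cases "finish_time i \<le> finish_time j") auto

lemma completes_in_iff: "completes_in xs ss i t \<longleftrightarrow> delivered i \<and> finish_time i = t"
  by (simp add: completes_in_def finish_time_def)

lemma finish_time_strict_mono: "delivered i \<Longrightarrow> i < j \<Longrightarrow> finish_time i < finish_time j"
  using finish_time_less_Y_Suc[of i] Y_Suc_le[of i j] Y_le_finish_time[of j] by simp

lemma completes_in_unique: "completes_in xs ss i t \<Longrightarrow> completes_in xs ss j t \<Longrightarrow> i = j"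
  unfolding completes_in_iff using finish_time_strict_mono[of i j] finish_time_strict_mono[of j i]
  by (metis less_irrefl linorder_neqE_nat)

lemma the_completes_in: "completes_in xs ss i t \<Longrightarrow> (THE i. completes_in xs ss i t) = i"
  using completes_in_unique by blast

lemma finite_delivered_before: "finite {i. delivered i \<and> finish_time i < t}"
proof (rule finite_subset)
  show "{i. delivered i \<and> finish_time i < t} \<subseteq> {..<t}"
    using Suc_le_Y Y_le_finish_time by (auto, metis add_lessD1 le_trans less_le_trans not_le)
qed simp

lemma freshest_gen_le_iff: "freshest_gen t \<le> b \<longleftrightarrow> (\<forall>i. delivered i \<and> finish_time i < t \<longrightarrow> Y i \<le> b)"
  unfolding freshest_gen_def using finite_delivered_before[of t] by (subst Max_le_iff) auto

lemma Y_le_freshest_gen: "delivered i \<Longrightarrow> finish_time i < t \<Longrightarrow> Y i \<le> freshest_gen t"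
  unfolding freshest_gen_def using finite_delivered_before[of t] by (intro Max_ge) auto

lemma freshest_gen_le: "freshest_gen t \<le> t"
  unfolding freshest_gen_le_iff using Y_le_finish_time by (meson le_trans less_imp_le)

lemma freshest_gen_Suc_delivery:
  assumes "delivered i" "finish_time i = t"
  shows "freshest_gen (Suc t) = Y i" and "freshest_gen t < Y i"
proof -
  have "\<forall>j. delivered j \<and> finish_time j < Suc t \<longrightarrow> Y j \<le> Y i"
  proof (intro allI impI)
    fix j assume j: "delivered j \<and> finish_time j < Suc t"
    show "Y j \<le> Y i"
    proof (cases "finish_time j = t")
      case True then show ?thesis using completes_in_unique[of j t i] assms j
        by (simp add: completes_in_iff)
    next
      case False then show ?thesis using j assms finish_time_less_imp_less[of j i] Y_mono[of j i]
        by auto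
    qed
  qed
  then have "freshest_gen (Suc t) \<le> Y i" using freshest_gen_le_iff by blast
  moreover have "Y i \<le> freshest_gen (Suc t)" using assms by (intro Y_le_freshest_gen) auto
  ultimately show "freshest_gen (Suc t) = Y i" by simp
  have "\<forall>j. delivered j \<and> finish_time j < t \<longrightarrow> Y j \<le> Y i - 1"
    using assms finish_time_less_imp_less[of _ i] Y_strict_mono
    by (metis Suc_pred' Y_ge_1 less_Suc_eq_le less_le_trans zero_less_one)
  then have "freshest_gen t \<le> Y i - 1" using freshest_gen_le_iff by blast
  then show "freshest_gen t < Y i" using Y_ge_1[of i] by simp
qed

lemma freshest_gen_Suc_no_delivery:
  assumes "\<not> (\<exists>i. completes_in xs ss i t)"
  shows "freshest_gen (Suc t) = freshest_gen t"
proof -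
  have "{i. delivered i \<and> finish_time i < Suc t} = {i. delivered i \<and> finish_time i < t}"
    using assms by (auto simp: completes_in_iff less_Suc_eq)
  then show ?thesis by (simp add: freshest_gen_def)
qed

lemma age_eq_diff_freshest_gen: "age xs ss t = t - freshest_gen t"
proof (induction t)
  case 0
  then show ?case by simp
next
  case (Suc t)
  show ?case
  proof (cases "\<exists>i. completes_in xs ss i t")
    case True
    then obtain i where i: "completes_in xs ss i t" by blast
    then have i_del: "delivered i" "finish_time i = t" by (auto simp: completes_in_iff)
    have "Y i \<le> t" using Y_le_finish_time[of i] i_del by simp
    then show ?thesis using freshest_gen_Suc_delivery[OF i_del] Suc True the_completes_in[OF i]
      by auto
  next
    case False
    then show ?thesis using Suc freshest_gen_Suc_no_delivery[OF False] freshest_gen_le[of t] by simp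
  qed
qed

lemma age_drop_iff_delivery: "age xs ss (Suc t) \<le> age xs ss t \<longleftrightarrow> (\<exists>i. completes_in xs ss i t)"
proof (cases "\<exists>i. completes_in xs ss i t")
  case True
  then obtain i where i: "completes_in xs ss i t" by blast
  then have i_del: "delivered i" "finish_time i = t" by (auto simp: completes_in_iff)
  have "Y i \<le> t" using Y_le_finish_time[of i] i_del by simp
  then show ?thesis
    using freshest_gen_Suc_delivery[OF i_del] True age_eq_diff_freshest_gen[of t]
        age_eq_diff_freshest_gen[of "Suc t"] by auto
next
  case False
  then show ?thesis
    using freshest_gen_Suc_no_delivery[OF False] freshest_gen_le[of t]
        age_eq_diff_freshest_gen[of t] age_eq_diff_freshest_gen[of "Suc t"] by auto
qed

definition delivered_by where "delivered_by T = {i. delivered i \<and> finish_time i \<le> T}"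

lemma finite_delivered_by: "finite (delivered_by T)"
  using finite_delivered_before[of "Suc T"] unfolding delivered_by_def
  by (rule rev_finite_subset) auto

lemma freshest_gen_1: "freshest_gen (Suc 0) = 0"
  using freshest_gen_le[of "Suc 0"] freshest_gen_le_iff[of "Suc 0" 0] Y_le_finish_time Y_ge_1
  by (metis le_antisym le_zero_eq less_Suc0 not_one_le_zero)

text \<open>The peak at the delivery of packet i is its finish time minus the generation time of the
  previously delivered packet, so the peaks telescope.\<close>
lemma peak_sums:
  "(\<Sum>t=1..T. if age xs ss (Suc t) \<le> age xs ss t then real (age xs ss t) else 0)
     = real (freshest_gen (Suc T)) + (\<Sum>i\<in>delivered_by T. real (ss i) - 1)
   \<and> (\<Sum>t=1..T. if age xs ss (Suc t) \<le> age xs ss t then (1::real) else 0) = real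
       (card (delivered_by T))"
proof (induction T)
  case 0
  have "\<And>i. 1 \<le> finish_time i" using Y_le_finish_time Y_ge_1 le_trans by blast
  then have "delivered_by 0 = {}" unfolding delivered_by_def
    by (metis (no_types, lifting) empty_Collect_eq le_zero_eq not_one_le_zero)
  then show ?case using freshest_gen_1 by simp
next
  case (Suc T)
  show ?case
  proof (cases "\<exists>i. completes_in xs ss i (Suc T)")
    case True
    then obtain i where i: "completes_in xs ss i (Suc T)" by blast
    then have i_del: "delivered i" "finish_time i = Suc T" by (auto simp: completes_in_iff)
    have delivered_by_Suc: "delivered_by (Suc T) = insert i (delivered_by T)" and ni:
        "i \<notin> delivered_by T"
      using i_del completes_in_unique by (auto simp: delivered_by_def le_Suc_eq completes_in_iff)
    have Yi: "Y i \<le> Suc T" using Y_le_finish_time[of i] i_del by simp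
    have "Y i + ss i = Suc T + 1" using i_del ss_pos[of i] by (simp add: finish_time_def)
    then have "real (Y i + ss i) = real (Suc T + 1)" by (simp only:)
    then have ssi: "real (ss i) - 1 = real (Suc T) - real (Y i)" by simp
    have ag: "age xs ss (Suc T) = Suc T - freshest_gen (Suc T)" by (rule age_eq_diff_freshest_gen)
    have pk: "age xs ss (Suc (Suc T)) \<le> age xs ss (Suc T)" using age_drop_iff_delivery True by blast
    have L2: "freshest_gen (Suc (Suc T)) = Y i" using freshest_gen_Suc_delivery[OF i_del] by simp
    have L1: "freshest_gen (Suc T) \<le> Suc T" by (rule freshest_gen_le)
    have "real (age xs ss (Suc T)) = real (Suc T) - real (freshest_gen (Suc T))" using ag L1 by simp
    then show ?thesis using Suc.IH pk L2 ssi delivered_by_Suc ni finite_delivered_by[of T] by simp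
  next
    case False
    have delivered_by_Suc: "delivered_by (Suc T) = delivered_by T" using False
      by (auto simp: delivered_by_def le_Suc_eq completes_in_iff)
    have pk: "\<not> age xs ss (Suc (Suc T)) \<le> age xs ss (Suc T)" using age_drop_iff_delivery False
      by blast
    show ?thesis using Suc.IH pk delivered_by_Suc freshest_gen_Suc_no_delivery[OF False] by simp
  qed
qed

lemma delivered_by_Max:
  assumes "delivered_by T \<noteq> {}"
  shows "delivered_by T = {i. i \<le> Max (delivered_by T) \<and> delivered i}" and
      "freshest_gen (Suc T) = Y (Max (delivered_by T))"
proof -
  let ?l = "Max (delivered_by T)"
  have l: "?l \<in> delivered_by T" using assms finite_delivered_by by (rule Max_in[rotated])
  show "delivered_by T = {i. i \<le> ?l \<and> delivered i}"
  proof
    show "delivered_by T \<subseteq> {i. i \<le> ?l \<and> delivered i}" using finite_delivered_by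
      by (auto simp: delivered_by_def)
    show "{i. i \<le> ?l \<and> delivered i} \<subseteq> delivered_by T" using l finish_time_mono
      by (auto simp: delivered_by_def intro: le_trans)
  qed
  have "freshest_gen (Suc T) \<le> Y ?l" unfolding freshest_gen_le_iff
    using finite_delivered_by Y_mono by (auto simp: delivered_by_def less_Suc_eq_le)
  moreover have "Y ?l \<le> freshest_gen (Suc T)" using l
    by (intro Y_le_freshest_gen) (auto simp: delivered_by_def)
  ultimately show "freshest_gen (Suc T) = Y ?l" by simp
qed

definition peak_quotient where
  "peak_quotient l =
      (real (Y l) + (\<Sum>i<Suc l. if delivered i then real (ss i) else 0) -
          (\<Sum>i<Suc l. if delivered i then 1 else 0))
           / (\<Sum>i<Suc l. if delivered i then 1 else 0)"

lemma peak_ratio_eq_peak_quotient: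
  assumes "delivered_by T \<noteq> {}"
  shows "peak_ratio xs ss T = peak_quotient (Max (delivered_by T))"
proof -
  let ?l = "Max (delivered_by T)"
  have e: "{i. i \<le> ?l \<and> delivered i} = {i\<in>{..<Suc ?l}. delivered i}" by auto
  have "(\<Sum>i\<in>delivered_by T. real (ss i) - 1) = (\<Sum>i\<in>{i\<in>{..<Suc ?l}. delivered i}. real (ss i) - 1)"
    by (subst delivered_by_Max(1)[OF assms], subst e) (rule refl)
  also have "\<dots> = (\<Sum>i<Suc ?l. if delivered i then real (ss i) - 1 else 0)"
    by (rule sum.inter_filter) simp
  also have "\<dots> =
      (\<Sum>i<Suc ?l. (if delivered i then real (ss i) else 0) - (if delivered i then 1 else 0))"
    by (rule sum.cong) auto
  also have "\<dots> = (\<Sum>i<Suc ?l. if delivered i then real (ss i) else 0) -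
      (\<Sum>i<Suc ?l. if delivered i then 1 else 0)"
    by (rule sum_subtractf)
  finally have s1:
      "(\<Sum>i\<in>delivered_by T. real (ss i) - 1) = (\<Sum>i<Suc ?l. if delivered i then real (ss i) else 0)
          - (\<Sum>i<Suc ?l. if delivered i then 1 else 0)" .
  have "real (card (delivered_by T)) = (\<Sum>i\<in>{i\<in>{..<Suc ?l}. delivered i}. 1)"
    by (subst delivered_by_Max(1)[OF assms], subst e) simp
  also have "\<dots> = (\<Sum>i<Suc ?l. if delivered i then 1 else 0)"
    by (rule sum.inter_filter) simp
  finally have s2: "real (card (delivered_by T)) = (\<Sum>i<Suc ?l. if delivered i then 1 else 0)" .
  show ?thesis unfolding peak_ratio_def using peak_sums[of T] delivered_by_Max(2)[OF assms] s1 s2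
    by (simp add: peak_quotient_def)
qed

lemma peak_ratio_tendsto_of_peak_quotient:
  assumes inf: "\<And>K. \<exists>i\<ge>K. delivered i" and q: "peak_quotient \<longlonglongrightarrow> Lp"
  shows "peak_ratio xs ss \<longlonglongrightarrow> Lp"
proof -
  obtain i0 where i0: "delivered i0" using inf by blast
  have ev: "eventually (\<lambda>T. delivered_by T \<noteq> {}) sequentially"
    using i0 unfolding eventually_sequentially
    by (intro exI[of _ "finish_time i0"]) (auto simp: delivered_by_def)
  have lim: "filterlim (\<lambda>T. Max (delivered_by T)) at_top sequentially"
    unfolding filterlim_at_top eventually_sequentially
  proof
    fix K
    obtain i where i: "i \<ge> K" "delivered i" using inf by blast
    show "\<exists>N. \<forall>T\<ge>N. K \<le> Max (delivered_by T)"
    proof (intro exI allI impI)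
      fix T assume "finish_time i \<le> T"
      then have "i \<in> delivered_by T" using i by (simp add: delivered_by_def)
      then show "K \<le> Max (delivered_by T)" using finite_delivered_by i by (meson Max_ge le_trans)
    qed
  qed
  have "(\<lambda>T. peak_quotient (Max (delivered_by T))) \<longlonglongrightarrow> Lp" using filterlim_compose[OF q lim] by simp
  moreover have
      "eventually (\<lambda>T. peak_quotient (Max (delivered_by T)) = peak_ratio xs ss T) sequentially"
    using ev by (rule eventually_mono) (simp add: peak_ratio_eq_peak_quotient)
  ultimately show ?thesis by (rule Lim_transform_eventually)
qed

lemma real_Y: "real (Y n) = 1 + (\<Sum>k<n. real (xs k))"
  by (simp add: gen_time_def)

lemma infinitely_many_delivered:
  assumes D: "(\<lambda>n. (\<Sum>k<n. if delivered k then 1 else 0) / real n) \<longlonglongrightarrow> P" and P: "P > 0"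
  shows "\<exists>i\<ge>K. delivered i"
proof (rule ccontr)
  assume none: "\<not> (\<exists>i\<ge>K. delivered i)"
  define c where "c = (\<Sum>k<K. if delivered k then 1 else 0 :: real)"
  have "(\<lambda>n. c / real n) \<longlonglongrightarrow> 0" by (rule lim_const_over_n)
  moreover have "\<forall>\<^sub>F n in sequentially. c / real n = (\<Sum>k<n. if delivered k then 1 else 0) / real n"
    using eventually_ge_at_top[of K]
  proof eventually_elim
    case (elim n)
    have "(\<Sum>k<n. if delivered k then 1 else 0 :: real) = c"
      unfolding c_def using elim none by (intro sum.mono_neutral_right) auto
    then show ?case by simp
  qed
  ultimately have "(\<lambda>n. (\<Sum>k<n. if delivered k then 1 else 0) / real n) \<longlonglongrightarrow> 0"
    by (rule Lim_transform_eventually)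
  then show False using LIMSEQ_unique[OF D] P by simp
qed

lemma peak_ratio_tendsto_of_averages:
  assumes X: "(\<lambda>n. (\<Sum>k<n. real (xs k)) / real n) \<longlonglongrightarrow> mx"
    and D: "(\<lambda>n. (\<Sum>k<n. if delivered k then 1 else 0) / real n) \<longlonglongrightarrow> P" and P: "P > 0"
    and S: "(\<lambda>n. (\<Sum>k<n. if delivered k then real (ss k) else 0) / real n) \<longlonglongrightarrow> ES"
  shows "peak_ratio xs ss \<longlonglongrightarrow> mx / P + ES / P - 1"
proof (rule peak_ratio_tendsto_of_peak_quotient)
  show "\<exists>i\<ge>K. delivered i" for K by (rule infinitely_many_delivered[OF D P])
  define sx where "sx n = (\<Sum>k<n. real (xs k))" for n
  define sd where "sd n = (\<Sum>k<n. if delivered k then 1 else 0 :: real)" for n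
  define sS where "sS n = (\<Sum>k<n. if delivered k then real (ss k) else 0)" for n
  have "(\<lambda>l. (1 / real l + sx l / real l + sS (Suc l) / real l - sd (Suc l) / real l) /
      (sd (Suc l) / real l))
          \<longlonglongrightarrow> (0 + mx + ES - P) / P"
    using P X LIMSEQ_Suc_over_n[OF S] LIMSEQ_Suc_over_n[OF D] unfolding sx_def sd_def sS_def
    by (intro tendsto_intros) auto
  moreover have "\<forall>\<^sub>F l in sequentially.
      (1 / real l + sx l / real l + sS (Suc l) / real l - sd (Suc l) / real l) /
          (sd (Suc l) / real l)
        = peak_quotient l"
    using eventually_gt_at_top[of 0]
  proof eventually_elim
    case (elim l)
    have "(1 / real l + sx l / real l + sS (Suc l) / real l - sd (Suc l) / real l) /
        (sd (Suc l) / real l)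
        = ((1 + sx l + sS (Suc l) - sd (Suc l)) / real l) / (sd (Suc l) / real l)"
      by (simp add: add_divide_distrib diff_divide_distrib)
    also have "\<dots> = (1 + sx l + sS (Suc l) - sd (Suc l)) / sd (Suc l)"
      using elim by (cases "sd (Suc l) = 0") (simp_all add: field_simps)
    also have "\<dots> = peak_quotient l"
      unfolding peak_quotient_def real_Y sx_def sd_def sS_def by simp
    finally show ?case .
  qed
  ultimately show "peak_quotient \<longlonglongrightarrow> mx / P + ES / P - 1"
    using P by (simp add: Lim_transform_eventually diff_divide_distrib add_divide_distrib)
qed

definition freshest_gen_before where
    "freshest_gen_before n = Max (insert 0 (Y ` {i. i < n \<and> delivered i}))"

lemma freshest_gen_before_le_iff: "freshest_gen_before n \<le> b \<longleftrightarrow> (\<forall>i. i < n \<and> delivered i \<longrightarrow> Y i \<le> b)"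
  unfolding freshest_gen_before_def by (subst Max_le_iff) auto

lemma Y_le_freshest_gen_before: "i < n \<Longrightarrow> delivered i \<Longrightarrow> Y i \<le> freshest_gen_before n"
  unfolding freshest_gen_before_def by (intro Max_ge) auto

lemma freshest_gen_before_le_Y: "freshest_gen_before n \<le> Y n"
  unfolding freshest_gen_before_le_iff using Y_mono by auto

lemma freshest_gen_before_0: "freshest_gen_before 0 = 0"
  using freshest_gen_before_le_iff[of 0 0] by simp

lemma freshest_gen_before_Suc:
    "freshest_gen_before (Suc n) = (if delivered n then Y n else freshest_gen_before n)"
proof (cases "delivered n")
  case True
  have "freshest_gen_before (Suc n) \<le> Y n" unfolding freshest_gen_before_le_iff using Y_mono by auto
  moreover have "Y n \<le> freshest_gen_before (Suc n)" using True
    by (intro Y_le_freshest_gen_before) auto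
  ultimately show ?thesis using True by simp
next
  case False
  then have "{i. i < Suc n \<and> delivered i} = {i. i < n \<and> delivered i}" by (auto simp: less_Suc_eq)
  then show ?thesis using False by (simp add: freshest_gen_before_def)
qed

lemma gen_age_eq: "gen_age xs ss n = Y n - freshest_gen_before n"
proof (induction n)
  case 0 then show ?case by (simp add: freshest_gen_before_0 gen_time_def)
next
  case (Suc n)
  then show ?case using freshest_gen_before_Suc[of n] Y_Suc[of n] freshest_gen_before_le_Y[of n]
    by auto
qed

lemma freshest_gen_in_block:
  assumes "Y n \<le> t" "t < Y (Suc n)"
  shows "freshest_gen t = (if delivered n \<and> finish_time n < t then Y n else freshest_gen_before n)"
proof -
  have lt: "i < n" if "delivered i" "finish_time i < t" "i \<noteq> n" for i
  proof (rule ccontr)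
    assume "\<not> i < n" then have "n < i" using that by simp
    then have "Y (Suc n) \<le> Y i" by (rule Y_Suc_le)
    then show False using Y_le_finish_time[of i] that assms by simp
  qed
  have gt: "finish_time i < t" if "i < n" "delivered i" for i
    using finish_time_less_Y_Suc[of i] Y_Suc_le[of i n] that assms by simp
  show ?thesis
  proof (cases "delivered n \<and> finish_time n < t")
    case True
    have "freshest_gen t \<le> Y n" unfolding freshest_gen_le_iff using lt Y_mono
      by (metis less_imp_le order_refl)
    moreover have "Y n \<le> freshest_gen t" using True by (intro Y_le_freshest_gen) auto
    ultimately show ?thesis using True by simp
  next
    case False
    have "freshest_gen t \<le> freshest_gen_before n" unfolding freshest_gen_le_iff
      using lt False Y_le_freshest_gen_before by metis
    moreover have "freshest_gen_before n \<le> freshest_gen t" unfolding freshest_gen_before_le_iff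
      using gt Y_le_freshest_gen by blast
    ultimately show ?thesis using False by (simp only: if_False)
  qed
qed

lemma age_in_block:
  assumes "d < xs n"
  shows "age xs ss (Y n + d) = d + (if d < ss n then gen_age xs ss n else 0)"
proof -
  have t: "Y n \<le> Y n + d" "Y n + d < Y (Suc n)" using assms Y_Suc[of n] by auto
  have c: "(delivered n \<and> finish_time n < Y n + d) \<longleftrightarrow> \<not> d < ss n"
    using assms ss_pos[of n] by (auto simp: finish_time_def)
  show ?thesis
    using age_eq_diff_freshest_gen[of "Y n + d"] freshest_gen_in_block[OF t] c
        freshest_gen_before_le_Y[of n] gen_age_eq[of n] by auto
qed

definition block_area where
  "block_area n = real (xs n) * (real (xs n) - 1) / 2 + real (gen_age xs ss n) * real
      (min (xs n) (ss n))"

lemma block_area_nonneg: "0 \<le> block_area n"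
  using xs_pos[of n] unfolding block_area_def
  by (intro add_nonneg_nonneg divide_nonneg_pos mult_nonneg_nonneg) auto

lemma sum_age_block: "(\<Sum>t\<in>{Y n..<Y (Suc n)}. real (age xs ss t)) = block_area n"
proof -
  have "(\<Sum>t\<in>{Y n..<Y (Suc n)}. real (age xs ss t)) =
      (\<Sum>t\<in>{0 + Y n..<xs n + Y n}. real (age xs ss t))"
    using Y_Suc[of n] by (simp add: add.commute)
  also have "\<dots> = (\<Sum>d\<in>{0..<xs n}. real (age xs ss (d + Y n)))"
    by (rule sum.shift_bounds_nat_ivl)
  also have "\<dots> = (\<Sum>d<xs n. real d + (if d < ss n then real (gen_age xs ss n) else 0))"
    using age_in_block by (intro sum.cong) (auto simp: add.commute)
  also have "\<dots> = (\<Sum>d<xs n. real d) + (\<Sum>d<xs n. if d < ss n then real (gen_age xs ss n) else 0)"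
    by (rule sum.distrib)
  also have "(\<Sum>d<xs n. if d < ss n then real (gen_age xs ss n) else 0) =
      (\<Sum>d\<in>{d\<in>{..<xs n}. d < ss n}. real (gen_age xs ss n))"
    by (rule sum.inter_filter[symmetric]) simp
  also have "{d\<in>{..<xs n}. d < ss n} = {..<min (xs n) (ss n)}" by auto
  finally show ?thesis by (simp add: block_area_def sum_lessThan_real_of_nat)
qed

lemma sum_age_until_gen: "(\<Sum>t\<in>{1..<Y N}. real (age xs ss t)) = (\<Sum>n<N. block_area n)"
proof (induction N)
  case 0 then show ?case by (simp add: gen_time_def)
next
  case (Suc N)
  have "(\<Sum>t\<in>{1..<Y (Suc N)}. real (age xs ss t)) = (\<Sum>t\<in>{1..<Y N}. real (age xs ss t)) +
      (\<Sum>t\<in>{Y N..<Y (Suc N)}. real (age xs ss t))"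
    using Y_ge_1[of N] Y_Suc[of N] by (intro sum.atLeastLessThan_concat[symmetric]) auto
  then show ?case using Suc sum_age_block by simp
qed

definition age_area where "age_area T = (\<Sum>t=1..T. real (age xs ss t))"

lemma age_area_mono: "T \<le> T' \<Longrightarrow> age_area T \<le> age_area T'"
  unfolding age_area_def by (intro sum_mono2) auto

lemma age_area_Y: "age_area (Y N - 1) = (\<Sum>n<N. block_area n)"
proof -
  have "{1..Y N - 1} = {1..<Y N}" using Y_ge_1[of N] by auto
  then show ?thesis unfolding age_area_def using sum_age_until_gen by simp
qed

definition last_block where "last_block T = Max {n. Y n \<le> Suc T}"

lemma finite_blocks_started: "finite {n. Y n \<le> Suc T}"
  by (rule finite_subset[of _ "{..Suc T}"]) (use Suc_le_Y in \<open>auto intro: le_trans Suc_leD\<close>)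

lemma last_block_bounds: "Y (last_block T) \<le> Suc T" "Suc T < Y (Suc (last_block T))"
proof -
  have ne: "0 \<in> {n. Y n \<le> Suc T}" by (simp add: gen_time_def)
  show "Y (last_block T) \<le> Suc T" using Max_in[OF finite_blocks_started] ne
    unfolding last_block_def by blast
  show "Suc T < Y (Suc (last_block T))"
  proof (rule ccontr)
    assume "\<not> Suc T < Y (Suc (last_block T))"
    then have "Suc (last_block T) \<le> last_block T" unfolding last_block_def
      using finite_blocks_started by (intro Max_ge) auto
    then show False by simp
  qed
qed

lemma filterlim_last_block: "filterlim last_block at_top sequentially"
  unfolding filterlim_at_top eventually_sequentially
proof
  fix K
  show "\<exists>N. \<forall>T\<ge>N. K \<le> last_block T"
  proof (intro exI allI impI)
    fix T assume "Y K \<le> T"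
    then show "K \<le> last_block T" unfolding last_block_def using finite_blocks_started
      by (intro Max_ge) auto
  qed
qed

lemma age_area_ratio_bounds:
  assumes N: "1 \<le> last_block T"
  defines "N \<equiv> last_block T"
  shows "(\<Sum>n<N. block_area n) / (\<Sum>k<Suc N. real (xs k)) \<le> age_area T / real T"
    and "age_area T / real T \<le> (\<Sum>n<Suc N. block_area n) / (\<Sum>k<N. real (xs k))"
proof -
  have sx_N: "(\<Sum>k<N. real (xs k)) \<le> real T" and sx_SN: "real T < (\<Sum>k<Suc N. real (xs k))"
    using last_block_bounds[of T] real_Y[of N] real_Y[of "Suc N"] unfolding N_def by linarith+
  have "real (xs 0) \<le> (\<Sum>k<N. real (xs k))" using N by (intro member_le_sum) (auto simp: N_def)
  then have sx_pos: "0 < (\<Sum>k<N. real (xs k))" using xs_pos[of 0] by linarith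
  have BS_nonneg: "0 \<le> (\<Sum>n<M. block_area n)" for M by (intro sum_nonneg block_area_nonneg)
  have area: "(\<Sum>n<N. block_area n) \<le> age_area T" "age_area T \<le> (\<Sum>n<Suc N. block_area n)"
    using age_area_mono[of "Y N - 1" T] age_area_mono[of T "Y (Suc N) - 1"]
      age_area_Y[of N] age_area_Y[of "Suc N"] last_block_bounds[of T]
    unfolding N_def by auto
  have T: "0 < real T" using sx_pos sx_N by linarith
  have "(\<Sum>n<N. block_area n) / (\<Sum>k<Suc N. real (xs k)) \<le> (\<Sum>n<N. block_area n) / real T"
    by (rule divide_left_mono[OF _ BS_nonneg]) (use sx_SN T in auto)
  also have "\<dots> \<le> age_area T / real T" using area(1) T by (intro divide_right_mono) auto
  finally show "(\<Sum>n<N. block_area n) / (\<Sum>k<Suc N. real (xs k)) \<le> age_area T / real T" .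
  have "age_area T / real T \<le> (\<Sum>n<Suc N. block_area n) / real T"
    using area(2) T by (intro divide_right_mono) auto
  also have "\<dots> \<le> (\<Sum>n<Suc N. block_area n) / (\<Sum>k<N. real (xs k))"
    by (rule divide_left_mono[OF _ BS_nonneg]) (use sx_N sx_pos in auto)
  finally show "age_area T / real T \<le> (\<Sum>n<Suc N. block_area n) / (\<Sum>k<N. real (xs k))" .
qed

lemma age_area_ratio_tendsto_of_averages:
  assumes B: "(\<lambda>N. (\<Sum>n<N. block_area n) / real N) \<longlonglongrightarrow> LB"
    and X: "(\<lambda>n. (\<Sum>k<n. real (xs k)) / real n) \<longlonglongrightarrow> mx" and mx: "mx > 0"
  shows "(\<lambda>T. age_area T / real T) \<longlonglongrightarrow> LB / mx"
proof -
  have quotient: "(\<lambda>N. f N / g N) \<longlonglongrightarrow> LB / mx"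
    if f: "(\<lambda>N. f N / real N) \<longlonglongrightarrow> LB" and g: "(\<lambda>N. g N / real N) \<longlonglongrightarrow> mx" for f g
  proof -
    have "(\<lambda>N. (f N / real N) / (g N / real N)) \<longlonglongrightarrow> LB / mx"
      using f g mx by (intro tendsto_divide) auto
    moreover have "\<forall>\<^sub>F N in sequentially. (f N / real N) / (g N / real N) = f N / g N"
      using eventually_gt_at_top[of 0]
    proof eventually_elim
      case (elim N)
      then show ?case by (cases "g N = 0") (simp_all add: field_simps)
    qed
    ultimately show ?thesis by (rule Lim_transform_eventually)
  qed
  have lower: "(\<lambda>N. (\<Sum>n<N. block_area n) / (\<Sum>k<Suc N. real (xs k))) \<longlonglongrightarrow> LB / mx"
    using quotient B LIMSEQ_Suc_over_n[OF X] .
  have upper: "(\<lambda>N. (\<Sum>n<Suc N. block_area n) / (\<Sum>k<N. real (xs k))) \<longlonglongrightarrow> LB / mx"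
    using quotient LIMSEQ_Suc_over_n[OF B] X .
  have ev: "\<forall>\<^sub>F T in sequentially. 1 \<le> last_block T"
    using filterlim_last_block unfolding filterlim_at_top by blast
  have "\<forall>\<^sub>F T in sequentially. (\<Sum>n<last_block T. block_area n) /
      (\<Sum>k<Suc (last_block T). real (xs k))
      \<le> age_area T / real T"
    using ev by (rule eventually_mono) (rule age_area_ratio_bounds(1))
  moreover have "\<forall>\<^sub>F T in sequentially. age_area T / real T
      \<le> (\<Sum>n<Suc (last_block T). block_area n) / (\<Sum>k<last_block T. real (xs k))"
    using ev by (rule eventually_mono) (rule age_area_ratio_bounds(2))
  ultimately show ?thesis
    by (rule tendsto_sandwich[OF _ _ filterlim_compose[OF lower filterlim_last_block]
          filterlim_compose[OF upper filterlim_last_block]])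
qed

end

section \<open>Etemadi's strong law of large numbers\<close>

locale pairwise_iid_nat = prob_space M for M :: "'a measure" +
  fixes Z :: "nat \<Rightarrow> 'a \<Rightarrow> nat"
  assumes Z_measurable[measurable]: "\<And>k. Z k \<in> measurable M (count_space UNIV)"
    and Z_pairwise_indep: "\<And>i j (f::nat \<Rightarrow> real) (g::nat \<Rightarrow> real). i \<noteq> j \<Longrightarrow>
      indep_var borel (\<lambda>\<omega>. f (Z i \<omega>)) borel (\<lambda>\<omega>. g (Z j \<omega>))"
    and Z_identically_distributed: "\<And>k. distr M (count_space UNIV) (Z k) = distr M (count_space UNIV) (Z 0)"
    and Z_integrable: "integrable M (\<lambda>\<omega>. real (Z 0 \<omega>))"
begin

lemma integral_Z_eq: "(\<integral>\<omega>. (f::nat \<Rightarrow> real) (Z k \<omega>) \<partial>M) = (\<integral>\<omega>. f (Z 0 \<omega>) \<partial>M)"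
proof -
  have "(\<integral>\<omega>. f (Z j \<omega>) \<partial>M) = integral\<^sup>L (distr M (count_space UNIV) (Z j)) f" for j
    by (subst integral_distr) auto
  then show ?thesis using Z_identically_distributed[of k] by simp
qed

lemma prob_Z_eq: "prob {\<omega>\<in>space M. P (Z k \<omega>)} = prob {\<omega>\<in>space M. P (Z 0 \<omega>)}"
proof -
  have "prob {\<omega>\<in>space M. P (Z j \<omega>)} = measure (distr M (count_space UNIV) (Z j)) {y. P y}" for j
    by (subst measure_distr) (auto simp: vimage_def Int_def conj_commute)
  then show ?thesis using Z_identically_distributed[of k] by simp
qed

definition mean where "mean = (\<integral>\<omega>. real (Z 0 \<omega>) \<partial>M)"

definition trunc :: "nat \<Rightarrow> nat \<Rightarrow> real" where "trunc k y = (if y \<le> k then real y else 0)"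

definition trunc_mean where "trunc_mean k = (\<integral>\<omega>. trunc k (Z 0 \<omega>) \<partial>M)"

lemma trunc_nonneg: "0 \<le> trunc k y" by (simp add: trunc_def)

lemma trunc_le_bound: "trunc k y \<le> real k" by (simp add: trunc_def)

lemma integrable_trunc: "integrable M (\<lambda>\<omega>. f (trunc k (Z j \<omega>)))" for f :: "real \<Rightarrow> real"
proof -
  define B where "B = (\<Sum>y\<le>k. \<bar>f (real y)\<bar>) + \<bar>f 0\<bar>"
  have b: "\<bar>f (trunc k y)\<bar> \<le> B" for y
  proof (cases "y \<le> k")
    case True
    have "\<bar>f (real y)\<bar> \<le> (\<Sum>y\<le>k. \<bar>f (real y)\<bar>)"
      using True by (intro member_le_sum[where f="\<lambda>y. \<bar>f (real y)\<bar>"]) auto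
    then show ?thesis using True by (simp add: trunc_def B_def)
  next
    case False
    have "0 \<le> (\<Sum>y\<le>k. \<bar>f (real y)\<bar>)" by (intro sum_nonneg) auto
    then show ?thesis using False by (simp add: trunc_def B_def)
  qed
  have "AE \<omega> in M. norm (f (trunc k (Z j \<omega>))) \<le> B" using b by (intro AE_I2) simp
  then show ?thesis by (rule integrable_const_bound) simp
qed

lemma trunc_mean_tendsto: "trunc_mean \<longlonglongrightarrow> mean"
  unfolding trunc_mean_def mean_def
proof (rule integral_dominated_convergence[where w="\<lambda>\<omega>. real (Z 0 \<omega>)"])
  show "AE \<omega> in M. (\<lambda>k. trunc k (Z 0 \<omega>)) \<longlonglongrightarrow> real (Z 0 \<omega>)"
  proof (intro AE_I2)
    fix \<omega>
    show "(\<lambda>k. trunc k (Z 0 \<omega>)) \<longlonglongrightarrow> real (Z 0 \<omega>)"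
      by (rule tendsto_eventually)
          (auto simp: trunc_def eventually_sequentially intro!: exI[of _ "Z 0 \<omega>"])
  qed
  show "AE \<omega> in M. norm (trunc k (Z 0 \<omega>)) \<le> real (Z 0 \<omega>)" for k
    by (intro AE_I2) (simp add: trunc_def)
qed (use Z_integrable in auto)

lemma summable_prob_exceeds_index: "summable (\<lambda>k. prob {\<omega>\<in>space M. k < Z k \<omega>})"
proof (rule summableI_nonneg_bounded)
  fix n
  have "(\<Sum>k<n. prob {\<omega>\<in>space M. k < Z k \<omega>}) = (\<Sum>k<n. prob {\<omega>\<in>space M. k < Z 0 \<omega>})"
  proof (rule sum.cong[OF refl])
    fix k show "prob {\<omega>\<in>space M. k < Z k \<omega>} = prob {\<omega>\<in>space M. k < Z 0 \<omega>}"
      using prob_Z_eq[of "\<lambda>y. k < y" k] by simp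
  qed
  also have "\<dots> = (\<Sum>k<n. \<integral>\<omega>. indicator {\<omega>\<in>space M. k < Z 0 \<omega>} \<omega> \<partial>M)"
    by simp
  also have "\<dots> = (\<integral>\<omega>. (\<Sum>k<n. indicator {\<omega>\<in>space M. k < Z 0 \<omega>} \<omega>) \<partial>M)"
  proof -
    define A where "A k = {\<omega>\<in>space M. k < Z 0 \<omega>}" for k
    have "(\<integral>\<omega>. (\<Sum>k<n. indicator (A k) \<omega>) \<partial>M) = (\<Sum>k<n. (\<integral>\<omega>. indicator (A k) \<omega> \<partial>M) :: real)"
      by (rule Bochner_Integration.integral_sum)
          (auto simp: A_def emeasure_eq_measure intro!: integrable_real_indicator)
    then show ?thesis by (simp add: A_def)
  qed
  also have "\<dots> \<le> (\<integral>\<omega>. real (Z 0 \<omega>) \<partial>M)"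
  proof (rule integral_mono)
    show "integrable M (\<lambda>\<omega>. \<Sum>k<n. indicator {\<omega>\<in>space M. k < Z 0 \<omega>} \<omega> :: real)"
      by (intro Bochner_Integration.integrable_sum integrable_real_indicator)
          (auto simp: emeasure_eq_measure)
    show "integrable M (\<lambda>\<omega>. real (Z 0 \<omega>))" by (rule Z_integrable)
    fix \<omega> assume \<omega>: "\<omega> \<in> space M"
    have "(\<Sum>k<n. indicator {\<omega>\<in>space M. k < Z 0 \<omega>} \<omega> :: real) = (\<Sum>k<n. if k < Z 0 \<omega> then 1 else 0)"
      using \<omega> by (intro sum.cong) (auto simp: indicator_def)
    also have "\<dots> = (\<Sum>k\<in>{k\<in>{..<n}. k < Z 0 \<omega>}. 1)" by (rule sum.inter_filter[symmetric]) simp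
    also have "\<dots> = real (card {k\<in>{..<n}. k < Z 0 \<omega>})" by simp
    also have "\<dots> \<le> real (card {..<Z 0 \<omega>})" by (intro of_nat_mono card_mono) auto
    finally show "(\<Sum>k<n. indicator {\<omega>\<in>space M. k < Z 0 \<omega>} \<omega> :: real) \<le> real (Z 0 \<omega>)" by simp
  qed
  finally show "(\<Sum>k<n. prob {\<omega>\<in>space M. k < Z k \<omega>}) \<le> (\<integral>\<omega>. real (Z 0 \<omega>) \<partial>M)" .
qed simp

lemma AE_eventually_le_index: "AE \<omega> in M. eventually (\<lambda>k. Z k \<omega> \<le> k) sequentially"
proof -
  have "AE \<omega> in M. eventually (\<lambda>k. \<omega> \<in> space M - {\<omega>\<in>space M. k < Z k \<omega>}) sequentially"
    using summable_prob_exceeds_index by (intro borel_cantelli_AE1) (auto simp: emeasure_eq_measure)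
  then show ?thesis by (rule eventually_mono) (auto elim!: eventually_mono)
qed

definition centered_trunc where "centered_trunc k \<omega> = trunc k (Z k \<omega>) - trunc_mean k"
definition trunc_sq_mean where "trunc_sq_mean k = (\<integral>\<omega>. (trunc k (Z 0 \<omega>))\<^sup>2 \<partial>M)"

lemma centered_trunc_measurable[measurable]: "centered_trunc k \<in> borel_measurable M"
  unfolding centered_trunc_def by measurable

lemma abs_centered_trunc_le: "\<bar>centered_trunc k \<omega>\<bar> \<le> real k + \<bar>trunc_mean k\<bar>"
  using trunc_nonneg[of k "Z k \<omega>"] trunc_le_bound[of k "Z k \<omega>"] unfolding centered_trunc_def
  by linarith

lemma integrable_centered_trunc_mult: "integrable M (\<lambda>\<omega>. centered_trunc i \<omega> * centered_trunc j \<omega>)"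
proof (rule integrable_const_bound)
  show "AE \<omega> in M. norm (centered_trunc i \<omega> * centered_trunc j \<omega>) \<le> (real i + \<bar>trunc_mean i\<bar>) *
      (real j + \<bar>trunc_mean j\<bar>)"
    by (intro AE_I2) (simp add: abs_mult mult_mono abs_centered_trunc_le)
qed simp

lemma integrable_centered_trunc: "integrable M (centered_trunc i)"
  by (rule integrable_const_bound[where B="real i + \<bar>trunc_mean i\<bar>"])
      (auto simp: abs_centered_trunc_le)

lemma integral_centered_trunc: "(\<integral>\<omega>. centered_trunc i \<omega> \<partial>M) = 0"
proof -
  have "(\<integral>\<omega>. centered_trunc i \<omega> \<partial>M) = (\<integral>\<omega>. trunc i (Z i \<omega>) \<partial>M) - (\<integral>\<omega>. trunc_mean i \<partial>M)"
    unfolding centered_trunc_def using integrable_trunc[of "\<lambda>x. x" i i]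
    by (subst Bochner_Integration.integral_diff) auto
  also have "(\<integral>\<omega>. trunc i (Z i \<omega>) \<partial>M) = trunc_mean i" unfolding trunc_mean_def
    by (rule integral_Z_eq)
  finally show ?thesis by (simp add: prob_space)
qed

lemma integral_centered_trunc_mult: "i \<noteq> j \<Longrightarrow> (\<integral>\<omega>. centered_trunc i \<omega> * centered_trunc j \<omega> \<partial>M) = 0"
proof -
  assume ij: "i \<noteq> j"
  have "indep_var borel (\<lambda>\<omega>. (\<lambda>y. trunc i y - trunc_mean i) (Z i \<omega>)) borel
      (\<lambda>\<omega>. (\<lambda>y. trunc j y - trunc_mean j) (Z j \<omega>))"
    by (rule Z_pairwise_indep[OF ij])
  then have ind: "indep_var borel (centered_trunc i) borel (centered_trunc j)"
    unfolding centered_trunc_def[abs_def] by simp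
  show ?thesis
    using indep_var_lebesgue_integral[OF ind integrable_centered_trunc integrable_centered_trunc]
        integral_centered_trunc by simp
qed

lemma integral_centered_trunc_sq_le: "(\<integral>\<omega>. (centered_trunc i \<omega>)\<^sup>2 \<partial>M) \<le> trunc_sq_mean i"
proof -
  have T1: "integrable M (\<lambda>\<omega>. trunc i (Z i \<omega>))" using integrable_trunc[of "\<lambda>x. x" i i] by simp
  have T2: "integrable M (\<lambda>\<omega>. (trunc i (Z i \<omega>))\<^sup>2)" using integrable_trunc[of "\<lambda>x. x\<^sup>2" i i] by simp
  have "(\<integral>\<omega>. (centered_trunc i \<omega>)\<^sup>2 \<partial>M)
      = (\<integral>\<omega>. (trunc i (Z i \<omega>))\<^sup>2 \<partial>M) - 2 * trunc_mean i * (\<integral>\<omega>. trunc i (Z i \<omega>) \<partial>M) +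
          (trunc_mean i)\<^sup>2"
    using T1 T2 by (simp add: centered_trunc_def power2_diff prob_space)
  also have "(\<integral>\<omega>. trunc i (Z i \<omega>) \<partial>M) = trunc_mean i" unfolding trunc_mean_def
    by (rule integral_Z_eq)
  also have "(\<integral>\<omega>. (trunc i (Z i \<omega>))\<^sup>2 \<partial>M) = trunc_sq_mean i"
    unfolding trunc_sq_mean_def by (rule integral_Z_eq[where f="\<lambda>y. (trunc i y)\<^sup>2"])
  finally show ?thesis by (simp add: power2_eq_square)
qed

lemma integral_sum_centered_trunc_sq_le:
  "(\<integral>\<omega>. (\<Sum>k<n. centered_trunc k \<omega>)\<^sup>2 \<partial>M) \<le> (\<Sum>k<n. trunc_sq_mean k)"
proof -
  have "(\<integral>\<omega>. (\<Sum>k<n. centered_trunc k \<omega>)\<^sup>2 \<partial>M) = (\<Sum>k<n. \<integral>\<omega>. (centered_trunc k \<omega>)\<^sup>2 \<partial>M)"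
    by (rule integral_sum_sq_of_orthogonal(2))
       (auto intro: integrable_centered_trunc_mult integral_centered_trunc_mult)
  also have "\<dots> \<le> (\<Sum>k<n. trunc_sq_mean k)" by (intro sum_mono integral_centered_trunc_sq_le)
  finally show ?thesis .
qed

lemma sum_trunc_sq_weighted_le: "(\<Sum>k<N. (trunc k y)\<^sup>2 / (real k + 1)\<^sup>2) \<le> real y"
proof (cases "y = 0")
  case True then show ?thesis by (simp add: trunc_def)
next
  case False
  then have y1: "1 \<le> y" by simp
  have "(\<Sum>k<N. (trunc k y)\<^sup>2 / (real k + 1)\<^sup>2) =
      (\<Sum>k<N. if y \<le> k then (real y)\<^sup>2 * (1 / (real k + 1)\<^sup>2) else 0)"
    by (rule sum.cong) (auto simp: trunc_def)
  also have "\<dots> = (\<Sum>k\<in>{k\<in>{..<N}. y \<le> k}. (real y)\<^sup>2 * (1 / (real k + 1)\<^sup>2))"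
    by (rule sum.inter_filter[symmetric]) simp
  also have "{k\<in>{..<N}. y \<le> k} = {y..<N}" by auto
  also have "(\<Sum>k\<in>{y..<N}. (real y)\<^sup>2 * (1 / (real k + 1)\<^sup>2)) = (real y)\<^sup>2 *
      (\<Sum>k\<in>{y..<N}. 1 / (real k + 1)\<^sup>2)"
    by (simp add: sum_distrib_left)
  also have "\<dots> \<le> (real y)\<^sup>2 * (1 / real y)"
    by (intro mult_left_mono sum_inverse_squares_tail_le y1) auto
  also have "\<dots> = real y" using y1 by (simp add: power2_eq_square)
  finally show ?thesis .
qed

lemma trunc_sq_mean_nonneg: "0 \<le> trunc_sq_mean k" unfolding trunc_sq_mean_def by simp

lemma sum_trunc_sq_mean_weighted_le: "(\<Sum>k<N. trunc_sq_mean k / (real k + 1)\<^sup>2) \<le> mean"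
proof -
  have "(\<Sum>k<N. trunc_sq_mean k / (real k + 1)\<^sup>2) =
      (\<Sum>k<N. \<integral>\<omega>. (trunc k (Z 0 \<omega>))\<^sup>2 / (real k + 1)\<^sup>2 \<partial>M)"
    unfolding trunc_sq_mean_def by simp
  also have "\<dots> = (\<integral>\<omega>. (\<Sum>k<N. (trunc k (Z 0 \<omega>))\<^sup>2 / (real k + 1)\<^sup>2) \<partial>M)"
    by (rule Bochner_Integration.integral_sum[symmetric])
        (rule integrable_trunc[of "\<lambda>x. x\<^sup>2 / (real _ + 1)\<^sup>2"])
  also have "\<dots> \<le> mean" unfolding mean_def
    by (rule integral_mono)
        (auto intro!: Bochner_Integration.integrable_sum Z_integrable sum_trunc_sq_weighted_le
            integrable_trunc[of "\<lambda>x. x\<^sup>2 / (real _ + 1)\<^sup>2"])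
  finally show ?thesis .
qed

lemma sum_variance_geom_floor_le:
  assumes a: "a > 1"
  shows "(\<Sum>j<J. (\<Sum>k<geom_floor a j. trunc_sq_mean k) / (real (geom_floor a j))\<^sup>2) \<le>
      (4 / (1 - 1 / a\<^sup>2)) * mean"
proof -
  define C where "C = 4 / (1 - 1 / a\<^sup>2)"
  have C0: "0 \<le> C" using a by (simp add: C_def)
  define K where "K = geom_floor a J"
  have Kj: "j < J \<Longrightarrow> geom_floor a j \<le> K" for j unfolding K_def
    using monoD[OF mono_geom_floor[OF a]] by simp
  have "(\<Sum>j<J. (\<Sum>k<geom_floor a j. trunc_sq_mean k) / (real (geom_floor a j))\<^sup>2)
      = (\<Sum>j<J. \<Sum>k<K. if k < geom_floor a j then trunc_sq_mean k * (1 / (real (geom_floor a j))\<^sup>2)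
          else 0)"
  proof (rule sum.cong[OF refl])
    fix j assume "j \<in> {..<J}"
    then have sub: "{..<geom_floor a j} \<subseteq> {..<K}" using Kj by auto
    have "(\<Sum>k<K. if k < geom_floor a j then trunc_sq_mean k * (1 / (real (geom_floor a j))\<^sup>2) else
        0)
        = (\<Sum>k\<in>{k\<in>{..<K}. k < geom_floor a j}. trunc_sq_mean k * (1 / (real (geom_floor a j))\<^sup>2))"
      by (rule sum.inter_filter[symmetric]) simp
    also have "{k\<in>{..<K}. k < geom_floor a j} = {..<geom_floor a j}" using sub by auto
    finally show
        "(\<Sum>k<geom_floor a j. trunc_sq_mean k) / (real (geom_floor a j))\<^sup>2 =
            (\<Sum>k<K. if k < geom_floor a j then trunc_sq_mean k * (1 / (real (geom_floor a j))\<^sup>2)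
                else 0)"
      by (simp add: sum_divide_distrib)
  qed
  also have "\<dots> =
      (\<Sum>k<K. \<Sum>j<J. if k < geom_floor a j then trunc_sq_mean k * (1 / (real (geom_floor a j))\<^sup>2)
          else 0)"
    by (rule sum.swap)
  also have "\<dots> =
      (\<Sum>k<K. trunc_sq_mean k *
          (\<Sum>j<J. if k < geom_floor a j then 1 / (real (geom_floor a j))\<^sup>2 else 0))"
    by (intro sum.cong refl) (auto simp: sum_distrib_left intro!: sum.cong)
  also have "\<dots> \<le> (\<Sum>k<K. trunc_sq_mean k * (C / (real k + 1)\<^sup>2))"
    by (intro sum_mono mult_left_mono trunc_sq_mean_nonneg)
        (use sum_inverse_sq_geom_floor_le[OF a] in \<open>simp add: C_def\<close>)
  also have "\<dots> = C * (\<Sum>k<K. trunc_sq_mean k / (real k + 1)\<^sup>2)"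
    by (simp add: sum_distrib_left mult.commute)
  also have "\<dots> \<le> C * mean" by (intro mult_left_mono sum_trunc_sq_mean_weighted_le C0)
  finally show ?thesis by (simp add: C_def)
qed

lemma AE_trunc_average_tendsto_geom_floor:
  assumes a: "a > 1"
  shows "AE \<omega> in M. (\<lambda>j. (\<Sum>k<geom_floor a j. trunc k (Z k \<omega>)) / real (geom_floor a j)) \<longlonglongrightarrow> mean"
proof -
  define W where "W j \<omega> = (\<Sum>k<geom_floor a j. centered_trunc k \<omega>) / real (geom_floor a j)" for j \<omega>
  have Wm[measurable]: "W j \<in> borel_measurable M" for j unfolding W_def by measurable
  have W2i: "integrable M (\<lambda>\<omega>. W j \<omega> ^ 2)" for j
    using integral_sum_sq_of_orthogonal(1)[OF integrable_centered_trunc_mult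
        integral_centered_trunc_mult]
    by (simp add: W_def power_divide)
  have EW: "(\<integral>\<omega>. W j \<omega> ^ 2 \<partial>M) \<le> (\<Sum>k<geom_floor a j. trunc_sq_mean k) / (real (geom_floor a j))\<^sup>2"
      for j
  proof -
    have "(\<integral>\<omega>. W j \<omega> ^ 2 \<partial>M) = (\<integral>\<omega>. (\<Sum>k<geom_floor a j. centered_trunc k \<omega>)\<^sup>2 \<partial>M) /
        (real (geom_floor a j))\<^sup>2"
      by (simp add: W_def power_divide)
    also have "\<dots> \<le> (\<Sum>k<geom_floor a j. trunc_sq_mean k) / (real (geom_floor a j))\<^sup>2"
      by (intro divide_right_mono integral_sum_centered_trunc_sq_le) auto
    finally show ?thesis .
  qed
  have summ1: "summable (\<lambda>j. (\<Sum>k<geom_floor a j. trunc_sq_mean k) / (real (geom_floor a j))\<^sup>2)"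
  proof (rule summableI_nonneg_bounded)
    show "(\<Sum>j<n. (\<Sum>k<geom_floor a j. trunc_sq_mean k) / (real (geom_floor a j))\<^sup>2) \<le>
        (4 / (1 - 1 / a\<^sup>2)) * mean" for n
      by (rule sum_variance_geom_floor_le[OF a])
  qed (auto intro!: divide_nonneg_nonneg sum_nonneg trunc_sq_mean_nonneg)
  have W0: "AE \<omega> in M. (\<lambda>j. W j \<omega>) \<longlonglongrightarrow> 0"
    by (rule AE_tendsto_zero_of_summable_second_moments[OF Wm W2i EW summ1])
  have ce: "(\<lambda>j. (\<Sum>k<geom_floor a j. trunc_mean k) / real (geom_floor a j)) \<longlonglongrightarrow> mean"
    using filterlim_compose[OF cesaro_mean_tendsto[OF trunc_mean_tendsto]
        filterlim_geom_floor[OF a]] by simp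
  show ?thesis using W0
  proof (rule eventually_mono)
    fix \<omega> assume "(\<lambda>j. W j \<omega>) \<longlonglongrightarrow> 0"
    then have "(\<lambda>j. W j \<omega> + (\<Sum>k<geom_floor a j. trunc_mean k) / real (geom_floor a j)) \<longlonglongrightarrow> 0 + mean"
      by (intro tendsto_add ce)
    moreover have
        "W j \<omega> + (\<Sum>k<geom_floor a j. trunc_mean k) / real (geom_floor a j) =
            (\<Sum>k<geom_floor a j. trunc k (Z k \<omega>)) / real (geom_floor a j)" for j
      by (simp add: W_def centered_trunc_def sum_subtractf add_divide_distrib[symmetric])
    ultimately show "(\<lambda>j. (\<Sum>k<geom_floor a j. trunc k (Z k \<omega>)) / real (geom_floor a j)) \<longlonglongrightarrow> mean"
      by simp
  qed
qed

lemma AE_trunc_error_average_tendsto: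
    "AE \<omega> in M. (\<lambda>n. (\<Sum>k<n. real (Z k \<omega>) - trunc k (Z k \<omega>)) / real n) \<longlonglongrightarrow> 0"
  using AE_eventually_le_index
proof (rule eventually_mono)
  fix \<omega> assume "eventually (\<lambda>k. Z k \<omega> \<le> k) sequentially"
  then obtain N where N: "\<And>k. k \<ge> N \<Longrightarrow> Z k \<omega> \<le> k" unfolding eventually_sequentially by blast
  define c where "c = (\<Sum>k<N. real (Z k \<omega>) - trunc k (Z k \<omega>))"
  have eq: "(\<Sum>k<n. real (Z k \<omega>) - trunc k (Z k \<omega>)) = c" if "n \<ge> N" for n
  proof -
    have "(\<Sum>k<n. real (Z k \<omega>) - trunc k (Z k \<omega>)) = c + (\<Sum>k\<in>{N..<n}. real (Z k \<omega>) - trunc k (Z k \<omega>))"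
      unfolding c_def
      using sum.atLeastLessThan_concat[of 0 N n "\<lambda>k. real (Z k \<omega>) - trunc k (Z k \<omega>)"] that
      by (simp add: lessThan_atLeast0)
    also have "(\<Sum>k\<in>{N..<n}. real (Z k \<omega>) - trunc k (Z k \<omega>)) = 0"
      by (intro sum.neutral) (auto simp: trunc_def N)
    finally show ?thesis by simp
  qed
  have "(\<lambda>n. c / real n) \<longlonglongrightarrow> 0" by (rule lim_const_over_n)
  moreover have
      "eventually (\<lambda>n. c / real n = (\<Sum>k<n. real (Z k \<omega>) - trunc k (Z k \<omega>)) / real n) sequentially"
    unfolding eventually_sequentially using eq by auto
  ultimately show "(\<lambda>n. (\<Sum>k<n. real (Z k \<omega>) - trunc k (Z k \<omega>)) / real n) \<longlonglongrightarrow> 0"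
    by (rule Lim_transform_eventually)
qed

lemma AE_average_tendsto_geom_floor:
  assumes a: "a > 1"
  shows "AE \<omega> in M. (\<lambda>j. (\<Sum>k<geom_floor a j. real (Z k \<omega>)) / real (geom_floor a j)) \<longlonglongrightarrow> mean"
  using AE_trunc_average_tendsto_geom_floor[OF a] AE_trunc_error_average_tendsto
proof (eventually_elim)
  case (elim \<omega>)
  have d: "(\<lambda>j. (\<Sum>k<geom_floor a j. real (Z k \<omega>) - trunc k (Z k \<omega>)) / real (geom_floor a j)) \<longlonglongrightarrow> 0"
    using filterlim_compose[OF elim(2) filterlim_geom_floor[OF a]] by simp
  have "(\<lambda>j. (\<Sum>k<geom_floor a j. trunc k (Z k \<omega>)) / real (geom_floor a j) +
      (\<Sum>k<geom_floor a j. real (Z k \<omega>) - trunc k (Z k \<omega>)) / real (geom_floor a j)) \<longlonglongrightarrow> mean + 0"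
    by (intro tendsto_add elim(1) d)
  moreover have
      "(\<Sum>k<geom_floor a j. trunc k (Z k \<omega>)) / real (geom_floor a j) +
          (\<Sum>k<geom_floor a j. real (Z k \<omega>) - trunc k (Z k \<omega>)) / real (geom_floor a j)
      = (\<Sum>k<geom_floor a j. real (Z k \<omega>)) / real (geom_floor a j)" for j
    by (simp add: sum_subtractf add_divide_distrib[symmetric])
  ultimately show ?case by simp
qed

theorem strong_law: "AE \<omega> in M. (\<lambda>n. (\<Sum>k<n. real (Z k \<omega>)) / real n) \<longlonglongrightarrow> mean"
proof -
  have "AE \<omega> in M. \<forall>m.
      (\<lambda>j. (\<Sum>k<geom_floor (1 + 1 / real (Suc m)) j. real (Z k \<omega>)) / real
          (geom_floor (1 + 1 / real (Suc m)) j)) \<longlonglongrightarrow> mean"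
    by (subst AE_all_countable) (auto intro!: AE_average_tendsto_geom_floor)
  then show ?thesis
  proof (rule eventually_mono)
    fix \<omega> assume H:
        "\<forall>m. (\<lambda>j. (\<Sum>k<geom_floor (1 + 1 / real (Suc m)) j. real (Z k \<omega>)) / real
            (geom_floor (1 + 1 / real (Suc m)) j)) \<longlonglongrightarrow> mean"
    show "(\<lambda>n. (\<Sum>k<n. real (Z k \<omega>)) / real n) \<longlonglongrightarrow> mean"
    proof (rule mono_ratio_tendsto_of_geom_floor[where s="\<lambda>n. \<Sum>k<n. real (Z k \<omega>)"])
      show "mono (\<lambda>n. \<Sum>k<n. real (Z k \<omega>))"
        by (intro monoI sum_mono2) auto
    qed (use H in \<open>auto intro: sum_nonneg\<close>)
  qed
qed

end

section \<open>Independence structure of the queue\<close>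

lemma borel_measurable_PiM_count_space_nat:
  "finite I \<Longrightarrow> f \<in> borel_measurable (PiM I (\<lambda>_. count_space (UNIV :: nat set)))"
  by (simp add: count_space_PiM_finite)

lemma measure_eq_of_distr_eq:
  assumes "distr M (count_space UNIV) V = distr M (count_space UNIV) W"
    and "V \<in> measurable M (count_space UNIV)" "W \<in> measurable M (count_space UNIV)"
  shows "measure M {\<omega>\<in>space M. P (V \<omega>)} = measure M {\<omega>\<in>space M. P (W \<omega>)}"
proof -
  have "measure M {\<omega>\<in>space M. P (U \<omega>)} = measure (distr M (count_space UNIV) U) {y. P y}"
    if "U \<in> measurable M (count_space UNIV)" for U
    using that by (subst measure_distr) (auto simp: vimage_def Int_def conj_commute)
  then show ?thesis using assms by metis
qed

definition coords :: "nat set \<Rightarrow> (nat + nat) set" where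
  "coords A = Inl ` A \<union> Inr ` A"

definition depends_on :: "nat set \<Rightarrow> ((nat + nat \<Rightarrow> nat) \<Rightarrow> 'b) \<Rightarrow> bool" where
  "depends_on A \<Phi> \<longleftrightarrow>
     (\<forall>z z'. (\<forall>k\<in>A. z (Inl k) = z' (Inl k) \<and> z (Inr k) = z' (Inr k)) \<longrightarrow> \<Phi> z = \<Phi> z')"

lemma depends_on_restrict: "depends_on A \<Phi> \<Longrightarrow> \<Phi> (restrict z (coords A)) = \<Phi> z"
  unfolding depends_on_def by (auto simp: coords_def)

lemma depends_on_mono: "A \<subseteq> B \<Longrightarrow> depends_on A \<Phi> \<Longrightarrow> depends_on B \<Phi>"
  unfolding depends_on_def by blast

lemma depends_on_comp: "depends_on A \<Phi> \<Longrightarrow> depends_on A (\<lambda>z. F (\<Phi> z))"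
  unfolding depends_on_def by metis

lemma depends_on_comp2: "depends_on A \<Phi> \<Longrightarrow> depends_on A \<Psi> \<Longrightarrow> depends_on A (\<lambda>z. F (\<Phi> z) (\<Psi> z))"
  unfolding depends_on_def by metis

lemma depends_on_coord: "k \<in> A \<Longrightarrow> depends_on A (\<lambda>z. F (z (Inl k)) (z (Inr k)))"
  unfolding depends_on_def by auto

locale lcfs_model = prob_space M for M :: "'a measure" +
  fixes X S :: "nat \<Rightarrow> 'a \<Rightarrow> nat"
  assumes indep: "indep_vars (\<lambda>_. count_space UNIV) (\<lambda>j. case j of Inl n \<Rightarrow> X n | Inr n \<Rightarrow> S n) UNIV"
    and X_distr: "\<And>n. distr M (count_space UNIV) (X n) = distr M (count_space UNIV) (X 0)"
    and S_distr: "\<And>n. distr M (count_space UNIV) (S n) = distr M (count_space UNIV) (S 0)"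
    and X_pos: "\<And>n \<omega>. \<omega> \<in> space M \<Longrightarrow> X n \<omega> \<ge> 1"
    and S_pos: "\<And>n \<omega>. \<omega> \<in> space M \<Longrightarrow> S n \<omega> \<ge> 1"
begin

definition XS :: "nat + nat \<Rightarrow> 'a \<Rightarrow> nat" where
  "XS j = (case j of Inl n \<Rightarrow> X n | Inr n \<Rightarrow> S n)"

definition path :: "'a \<Rightarrow> nat + nat \<Rightarrow> nat" where
  "path \<omega> = (\<lambda>j. XS j \<omega>)"

lemma path_Inl [simp]: "path \<omega> (Inl k) = X k \<omega>" and path_Inr [simp]: "path \<omega> (Inr k) = S k \<omega>"
  by (simp_all add: path_def XS_def)

lemma indep_XS: "indep_vars (\<lambda>_. count_space UNIV) XS UNIV"
  using indep unfolding XS_def by simp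

lemma X_measurable [measurable]: "X n \<in> measurable M (count_space UNIV)"
  and S_measurable [measurable]: "S n \<in> measurable M (count_space UNIV)"
  using indep_XS unfolding indep_vars_def XS_def by (metis (no_types) UNIV_I sum.case)+

lemma measurable_restrict_path:
  "(\<lambda>\<omega>. restrict (path \<omega>) (coords A)) \<in> measurable M (PiM (coords A) (\<lambda>_. count_space UNIV))"
  using indep_XS unfolding indep_vars_def path_def by (intro measurable_restrict) auto

lemma borel_measurable_depends_on:
  fixes \<Phi> :: "(nat + nat \<Rightarrow> nat) \<Rightarrow> real"
  assumes "finite A" "depends_on A \<Phi>"
  shows "(\<lambda>\<omega>. \<Phi> (path \<omega>)) \<in> borel_measurable M"
proof -
  have "(\<lambda>\<omega>. \<Phi> (restrict (path \<omega>) (coords A))) \<in> borel_measurable M"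
    using measurable_restrict_path borel_measurable_PiM_count_space_nat
    by (rule measurable_compose) (use assms(1) in \<open>simp add: coords_def\<close>)
  then show ?thesis using depends_on_restrict[OF assms(2)] by simp
qed

lemma indep_var_depends_on:
  fixes \<Phi> \<Psi> :: "(nat + nat \<Rightarrow> nat) \<Rightarrow> real"
  assumes "finite A" "finite B" "A \<inter> B = {}" "depends_on A \<Phi>" "depends_on B \<Psi>"
  shows "indep_var borel (\<lambda>\<omega>. \<Phi> (path \<omega>)) borel (\<lambda>\<omega>. \<Psi> (path \<omega>))"
proof -
  have "indep_var (PiM (coords A) (\<lambda>_. count_space UNIV)) (\<lambda>\<omega>. restrict (path \<omega>) (coords A))
                  (PiM (coords B) (\<lambda>_. count_space UNIV)) (\<lambda>\<omega>. restrict (path \<omega>) (coords B))"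
    using indep_var_restrict[OF indep_XS, of "coords A" "coords B"] assms(3)
    by (auto simp: coords_def path_def)
  then have "indep_var borel (\<Phi> \<circ> (\<lambda>\<omega>. restrict (path \<omega>) (coords A)))
                       borel (\<Psi> \<circ> (\<lambda>\<omega>. restrict (path \<omega>) (coords B)))"
    by (rule indep_var_compose)
        (use assms(1,2) in \<open>auto intro: borel_measurable_PiM_count_space_nat simp: coords_def\<close>)
  then show ?thesis using depends_on_restrict[OF assms(4)] depends_on_restrict[OF assms(5)]
    by (simp add: comp_def)
qed

lemma integral_mult_depends_on:
  fixes \<Phi> \<Psi> :: "(nat + nat \<Rightarrow> nat) \<Rightarrow> real"
  assumes "finite A" "finite B" "A \<inter> B = {}" "depends_on A \<Phi>" "depends_on B \<Psi>"
    and "integrable M (\<lambda>\<omega>. \<Phi> (path \<omega>))" "integrable M (\<lambda>\<omega>. \<Psi> (path \<omega>))"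
  shows "integrable M (\<lambda>\<omega>. \<Phi> (path \<omega>) * \<Psi> (path \<omega>))"
    and "(\<integral>\<omega>. \<Phi> (path \<omega>) * \<Psi> (path \<omega>) \<partial>M) = (\<integral>\<omega>. \<Phi> (path \<omega>) \<partial>M) * (\<integral>\<omega>. \<Psi> (path \<omega>) \<partial>M)"
  using indep_var_integrable indep_var_lebesgue_integral indep_var_depends_on[OF assms(1-5)]
      assms(6,7)
  by blast+

lemma prob_X_S_eq:
    "prob {\<omega>\<in>space M. X k \<omega> = a \<and> S k \<omega> = b} = prob {\<omega>\<in>space M. X 0 \<omega> = a \<and> S 0 \<omega> = b}"
proof -
  have split:
      "prob {\<omega>\<in>space M. X k \<omega> = a \<and> S k \<omega> = b} = prob {\<omega>\<in>space M. X k \<omega> = a} * prob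
          {\<omega>\<in>space M. S k \<omega> = b}" for k
  proof -
    let ?A = "\<lambda>j::nat+nat. if j = Inl k then {a} else {b}"
    have "prob (\<Inter>j\<in>{Inl k, Inr k}. XS j -` ?A j \<inter> space M) =
        (\<Prod>j\<in>{Inl k, Inr k}. prob (XS j -` ?A j \<inter> space M))"
      by (rule indep_varsD[OF indep_XS]) auto
    moreover have "(\<Inter>j\<in>{Inl k, Inr k}. XS j -` ?A j \<inter> space M) = {\<omega>\<in>space M. X k \<omega> = a \<and> S k \<omega> = b}"
      by (auto simp: XS_def)
    ultimately show ?thesis by (simp add: XS_def vimage_def Int_def conj_commute)
  qed
  show ?thesis
    using split[of k] split[of 0]
      measure_eq_of_distr_eq[OF X_distr[of k] X_measurable X_measurable, of "\<lambda>x. x = a"]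
      measure_eq_of_distr_eq[OF S_distr[of k] S_measurable S_measurable, of "\<lambda>x. x = b"]
    by simp
qed

lemma measurable_X_S [measurable]: "(\<lambda>\<omega>. (X k \<omega>, S k \<omega>)) \<in> measurable M (count_space UNIV)"
  using measurable_compose_countable[where f="\<lambda>a \<omega>. (a, S k \<omega>)" and g="X k" and
      N="count_space UNIV"]
  by (simp add: measurable_compose[OF S_measurable])

lemma distr_X_S_eq:
  "distr M (count_space UNIV) (\<lambda>\<omega>. (X k \<omega>, S k \<omega>)) = distr M (count_space UNIV)
      (\<lambda>\<omega>. (X 0 \<omega>, S 0 \<omega>))"
proof (rule measure_eqI_countable)
  fix ab :: "nat \<times> nat"
  obtain a b where ab: "ab = (a, b)" by force
  have "emeasure (distr M (count_space UNIV) (\<lambda>\<omega>. (X j \<omega>, S j \<omega>))) {ab} = prob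
      {\<omega>\<in>space M. X j \<omega> = a \<and> S j \<omega> = b}" for j
    by (simp add: emeasure_distr emeasure_eq_measure ab vimage_def Int_def conj_commute)
  then show "emeasure (distr M (count_space UNIV) (\<lambda>\<omega>. (X k \<omega>, S k \<omega>))) {ab}
      = emeasure (distr M (count_space UNIV) (\<lambda>\<omega>. (X 0 \<omega>, S 0 \<omega>))) {ab}"
    using prob_X_S_eq by simp
qed auto

lemma borel_measurable_pair_fun [measurable]:
  "(\<lambda>\<omega>. (F :: nat \<Rightarrow> nat \<Rightarrow> real) (X k \<omega>) (S k \<omega>)) \<in> borel_measurable M"
  using measurable_compose[OF measurable_X_S, of "case_prod F"] by simp

lemma sets_delivered [measurable]: "{\<omega>\<in>space M. S n \<omega> \<le> X n \<omega>} \<in> sets M"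
proof -
  have "{\<omega>\<in>space M. S n \<omega> \<le> X n \<omega>} = (\<lambda>\<omega>. (X n \<omega>, S n \<omega>)) -` {(x, s). s \<le> x} \<inter> space M"
    by auto
  also have "\<dots> \<in> sets M" using measurable_X_S by (rule measurable_sets) simp
  finally show ?thesis .
qed

lemma integrable_delivered: "integrable M (\<lambda>\<omega>. if S n \<omega> \<le> X n \<omega> then 1 else 0 :: real)"
proof (rule integrable_const_bound[where B = 1])
  show "AE \<omega> in M. norm (if S n \<omega> \<le> X n \<omega> then 1 else 0 :: real) \<le> 1" by (intro AE_I2) simp
  show "(\<lambda>\<omega>. if S n \<omega> \<le> X n \<omega> then 1 else 0 :: real) \<in> borel_measurable M"
    using borel_measurable_pair_fun[of "\<lambda>x s. if s \<le> x then 1 else 0" n] by (simp only:)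
qed

lemma integral_delivered:
  "(\<integral>\<omega>. (if S 0 \<omega> \<le> X 0 \<omega> then 1 else 0) \<partial>M) = prob {\<omega>\<in>space M. S 0 \<omega> \<le> X 0 \<omega>}"
proof -
  have "(\<integral>\<omega>. (if S 0 \<omega> \<le> X 0 \<omega> then 1 else 0) \<partial>M) = (\<integral>\<omega>. indicator {\<omega>\<in>space M. S 0 \<omega> \<le> X 0 \<omega>} \<omega> \<partial>M)"
    by (rule Bochner_Integration.integral_cong) (auto simp: indicator_def)
  also have "\<dots> = prob {\<omega>\<in>space M. S 0 \<omega> \<le> X 0 \<omega>}"
    by (subst Bochner_Integration.integral_indicator) (auto intro: arg_cong[where f = "measure M"])
  finally show ?thesis .
qed

lemma integral_pair_fun_eq:
  "(\<integral>\<omega>. (F :: nat \<Rightarrow> nat \<Rightarrow> real) (X k \<omega>) (S k \<omega>) \<partial>M) = (\<integral>\<omega>. F (X 0 \<omega>) (S 0 \<omega>) \<partial>M)"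
proof -
  have "(\<integral>\<omega>. F (X j \<omega>) (S j \<omega>) \<partial>M) = integral\<^sup>L (distr M (count_space UNIV) (\<lambda>\<omega>. (X j \<omega>, S j \<omega>)))
      (case_prod F)" for j
    by (subst integral_distr) auto
  then show ?thesis using distr_X_S_eq[of k] by simp
qed

lemma integrable_pair_fun_iff:
  "integrable M (\<lambda>\<omega>. (F :: nat \<Rightarrow> nat \<Rightarrow> real) (X k \<omega>) (S k \<omega>)) \<longleftrightarrow> integrable M
      (\<lambda>\<omega>. F (X 0 \<omega>) (S 0 \<omega>))"
proof -
  have "integrable M (\<lambda>\<omega>. F (X j \<omega>) (S j \<omega>)) \<longleftrightarrow> integrable
      (distr M (count_space UNIV) (\<lambda>\<omega>. (X j \<omega>, S j \<omega>))) (case_prod F)" for j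
    by (subst integrable_distr_eq) auto
  then show ?thesis using distr_X_S_eq[of k] by simp
qed

lemma pairwise_iid_nat_pair_fun:
  fixes \<phi> :: "nat \<Rightarrow> nat \<Rightarrow> nat"
  assumes "integrable M (\<lambda>\<omega>. real (\<phi> (X 0 \<omega>) (S 0 \<omega>)))"
  shows "pairwise_iid_nat M (\<lambda>k \<omega>. \<phi> (X k \<omega>) (S k \<omega>))"
proof
  show meas: "(\<lambda>\<omega>. \<phi> (X k \<omega>) (S k \<omega>)) \<in> measurable M (count_space UNIV)" for k
    using measurable_compose[OF measurable_X_S, of "case_prod \<phi>"] by simp
  show "distr M (count_space UNIV) (\<lambda>\<omega>. \<phi> (X k \<omega>) (S k \<omega>)) = distr M (count_space UNIV)
      (\<lambda>\<omega>. \<phi> (X 0 \<omega>) (S 0 \<omega>))" for k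
  proof -
    have "distr M (count_space UNIV) (\<lambda>\<omega>. \<phi> (X j \<omega>) (S j \<omega>))
        = distr (distr M (count_space UNIV) (\<lambda>\<omega>. (X j \<omega>, S j \<omega>))) (count_space UNIV)
            (case_prod \<phi>)" for j
      by (subst distr_distr) (auto simp: comp_def)
    then show ?thesis using distr_X_S_eq[of k] by simp
  qed
  show "integrable M (\<lambda>\<omega>. real (\<phi> (X 0 \<omega>) (S 0 \<omega>)))" by fact
  fix i j :: nat and f g :: "nat \<Rightarrow> real" assume "i \<noteq> j"
  then show "indep_var borel (\<lambda>\<omega>. f (\<phi> (X i \<omega>) (S i \<omega>))) borel (\<lambda>\<omega>. g (\<phi> (X j \<omega>) (S j \<omega>)))"
    using indep_var_depends_on[of "{i}" "{j}" "\<lambda>z. f (\<phi> (z (Inl i)) (z (Inr i)))"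
        "\<lambda>z. g (\<phi> (z (Inl j)) (z (Inr j)))"]
      depends_on_coord[of i "{i}" "\<lambda>x y. f (\<phi> x y)"] depends_on_coord[of j "{j}" "\<lambda>x y. g (\<phi> x y)"]
    by simp
qed

lemma AE_average_pair_fun_tendsto:
  fixes \<phi> :: "nat \<Rightarrow> nat \<Rightarrow> nat"
  assumes "integrable M (\<lambda>\<omega>. real (\<phi> (X 0 \<omega>) (S 0 \<omega>)))"
  shows "AE \<omega> in M. (\<lambda>n. (\<Sum>k<n. real (\<phi> (X k \<omega>) (S k \<omega>))) / real n)
                      \<longlonglongrightarrow> (\<integral>\<omega>. real (\<phi> (X 0 \<omega>) (S 0 \<omega>)) \<partial>M)"
proof -
  interpret pairwise_iid_nat M "\<lambda>k \<omega>. \<phi> (X k \<omega>) (S k \<omega>)"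
    by (rule pairwise_iid_nat_pair_fun[OF assms])
  show ?thesis using strong_law unfolding mean_def .
qed

end

section \<open>The age at generation times\<close>

lemma gen_age_cong:
  "(\<And>k. k < n \<Longrightarrow> xs k = xs' k \<and> ss k = ss' k) \<Longrightarrow> gen_age xs ss n = gen_age xs' ss' n"
  by (induction n) auto

definition gen_age_coords :: "nat \<Rightarrow> (nat + nat \<Rightarrow> nat) \<Rightarrow> real" where
  "gen_age_coords n z = real (gen_age (\<lambda>k. z (Inl k)) (\<lambda>k. z (Inr k)) n)"

lemma depends_on_gen_age_coords: "depends_on {..<n} (gen_age_coords n)"
  unfolding depends_on_def gen_age_coords_def by (auto intro!: arg_cong[where f=real] gen_age_cong)

lemma le_of_affine_recursion:
  fixes u :: "nat \<Rightarrow> real"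
  assumes "u 0 \<le> B" "\<And>n. u (Suc n) \<le> b + u n * q" "0 \<le> q" "b + B * q \<le> B"
  shows "u n \<le> B"
proof (induction n)
  case (Suc n)
  have "u n * q \<le> B * q" using Suc assms(3) by (rule mult_right_mono)
  then show ?case using assms(2)[of n] assms(4) by linarith
qed (use assms(1) in simp)

context lcfs_model
begin

definition gen_age_rv :: "nat \<Rightarrow> 'a \<Rightarrow> real" where
  "gen_age_rv n \<omega> = real (gen_age (\<lambda>k. X k \<omega>) (\<lambda>k. S k \<omega>) n)"

definition lost :: "nat \<Rightarrow> 'a \<Rightarrow> real" where
  "lost n \<omega> = (if S n \<omega> \<le> X n \<omega> then 0 else 1)"

lemma gen_age_rv_0: "gen_age_rv 0 \<omega> = 1"
  by (simp add: gen_age_rv_def)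

lemma gen_age_rv_Suc: "gen_age_rv (Suc n) \<omega> = real (X n \<omega>) + gen_age_rv n \<omega> * lost n \<omega>"
  by (simp add: gen_age_rv_def lost_def)

lemma gen_age_rv_ge_1: "\<omega> \<in> space M \<Longrightarrow> 1 \<le> gen_age_rv n \<omega>"
  by (induction n) (use X_pos in \<open>auto simp: gen_age_rv_0 gen_age_rv_Suc lost_def\<close>)

lemma gen_age_rv_path: "gen_age_rv n \<omega> = gen_age_coords n (path \<omega>)"
  by (simp add: gen_age_rv_def gen_age_coords_def)

lemma gen_age_rv_measurable [measurable]: "gen_age_rv n \<in> borel_measurable M"
  unfolding gen_age_rv_path[abs_def]
  by (rule borel_measurable_depends_on[OF _ depends_on_gen_age_coords]) simp

text \<open>The age at generation n is determined by the first n packets and hence independent of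
  packet n.\<close>
lemma integral_gen_age_mult_pair_fun:
  fixes F :: "nat \<Rightarrow> nat \<Rightarrow> real" and G :: "real \<Rightarrow> real"
  assumes "integrable M (\<lambda>\<omega>. G (gen_age_rv n \<omega>))" "integrable M (\<lambda>\<omega>. F (X n \<omega>) (S n \<omega>))"
  shows "integrable M (\<lambda>\<omega>. G (gen_age_rv n \<omega>) * F (X n \<omega>) (S n \<omega>))"
    and "(\<integral>\<omega>. G (gen_age_rv n \<omega>) * F (X n \<omega>) (S n \<omega>) \<partial>M)
           = (\<integral>\<omega>. G (gen_age_rv n \<omega>) \<partial>M) * (\<integral>\<omega>. F (X n \<omega>) (S n \<omega>) \<partial>M)"
  using integral_mult_depends_on[of "{..<n}" "{n}", OF _ _ _
      depends_on_comp[OF depends_on_gen_age_coords, where F = G] depends_on_coord[of n "{n}" F]]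
          assms
  by (simp_all add: gen_age_rv_path)

end

locale lcfs_model_L2 = lcfs_model +
  assumes X_sq_integrable: "integrable M (\<lambda>\<omega>. (real (X 0 \<omega>))\<^sup>2)"
    and deliv_prob_pos: "prob {\<omega>\<in>space M. S 0 \<omega> \<le> X 0 \<omega>} > 0"
begin

definition p where "p = prob {\<omega>\<in>space M. S 0 \<omega> \<le> X 0 \<omega>}"
definition mx where "mx = (\<integral>\<omega>. real (X 0 \<omega>) \<partial>M)"
definition m2 where "m2 = (\<integral>\<omega>. (real (X 0 \<omega>))\<^sup>2 \<partial>M)"

lemma p_pos: "0 < p" and p_le_1: "p \<le> 1"
  using deliv_prob_pos by (simp_all add: p_def)

lemma integrable_X: "integrable M (\<lambda>\<omega>. real (X n \<omega>))"
proof -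
  have "integrable M (\<lambda>\<omega>. real (X 0 \<omega>))"
    by (rule square_integrable_imp_integrable[OF _ X_sq_integrable]) measurable
  then show ?thesis using integrable_pair_fun_iff[of "\<lambda>x s. real x" n] by simp
qed

lemma integrable_X_sq: "integrable M (\<lambda>\<omega>. (real (X n \<omega>))\<^sup>2)"
  using integrable_pair_fun_iff[of "\<lambda>x s. (real x)\<^sup>2" n] X_sq_integrable by simp

lemma integral_X: "(\<integral>\<omega>. real (X n \<omega>) \<partial>M) = mx"
  unfolding mx_def by (rule integral_pair_fun_eq[of "\<lambda>x s. real x"])

lemma integral_X_sq: "(\<integral>\<omega>. (real (X n \<omega>))\<^sup>2 \<partial>M) = m2"
  unfolding m2_def by (rule integral_pair_fun_eq[of "\<lambda>x s. (real x)\<^sup>2"])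

lemma integrable_lost: "integrable M (lost n)"
proof (rule integrable_const_bound[where B = 1])
  show "lost n \<in> borel_measurable M"
    using borel_measurable_pair_fun[of "\<lambda>x s. if s \<le> x then 0 else 1" n]
    by (simp only: lost_def[abs_def])
  show "AE \<omega> in M. norm (lost n \<omega>) \<le> 1" by (intro AE_I2) (simp add: lost_def)
qed

lemma integral_lost: "(\<integral>\<omega>. lost n \<omega> \<partial>M) = 1 - p"
proof -
  have "(\<integral>\<omega>. lost n \<omega> \<partial>M) = (\<integral>\<omega>. lost 0 \<omega> \<partial>M)"
    unfolding lost_def by (rule integral_pair_fun_eq[of "\<lambda>x s. if s \<le> x then 0 else 1"])
  also have "\<dots> = (\<integral>\<omega>. 1 - (if S 0 \<omega> \<le> X 0 \<omega> then 1 else 0) \<partial>M)"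
    by (rule Bochner_Integration.integral_cong) (auto simp: lost_def)
  also have "\<dots> = 1 - p"
    using integral_delivered integrable_delivered
    by (subst Bochner_Integration.integral_diff) (auto simp: p_def prob_space)
  finally show ?thesis .
qed

lemma integrable_gen_age_rv_sq: "integrable M (\<lambda>\<omega>. (gen_age_rv n \<omega>)\<^sup>2)"
proof (induction n)
  case (Suc n)
  show ?case
  proof (rule Bochner_Integration.integrable_bound)
    show "integrable M (\<lambda>\<omega>. 2 * (real (X n \<omega>))\<^sup>2 + 2 * (gen_age_rv n \<omega>)\<^sup>2)"
      using Suc integrable_X_sq by simp
    have "(gen_age_rv (Suc n) \<omega>)\<^sup>2 \<le> 2 * (real (X n \<omega>))\<^sup>2 + 2 * (gen_age_rv n \<omega>)\<^sup>2"
      if "\<omega> \<in> space M" for \<omega>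
    proof -
      have "1 \<le> gen_age_rv n \<omega>" using gen_age_rv_ge_1[OF that] .
      then have "gen_age_rv (Suc n) \<omega> \<le> real (X n \<omega>) + gen_age_rv n \<omega>" "0 \<le> gen_age_rv (Suc n) \<omega>"
        by (auto simp: gen_age_rv_Suc lost_def)
      then have "(gen_age_rv (Suc n) \<omega>)\<^sup>2 \<le> (real (X n \<omega>) + gen_age_rv n \<omega>)\<^sup>2"
        by (rule power_mono)
      then show ?thesis
        using sum_squares_bound[of "real (X n \<omega>)" "gen_age_rv n \<omega>"] by (simp add: power2_sum)
    qed
    then show "AE \<omega> in M. norm ((gen_age_rv (Suc n) \<omega>)\<^sup>2)
                 \<le> norm (2 * (real (X n \<omega>))\<^sup>2 + 2 * (gen_age_rv n \<omega>)\<^sup>2)"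
      by (intro AE_I2) simp
  qed measurable
qed (simp add: gen_age_rv_0)

lemma integrable_gen_age_rv: "integrable M (gen_age_rv n)"
  by (rule square_integrable_imp_integrable[OF _ integrable_gen_age_rv_sq]) measurable

lemma integrable_X_lost: "integrable M (\<lambda>\<omega>. real (X n \<omega>) * lost n \<omega>)"
proof (rule Bochner_Integration.integrable_bound[OF integrable_X])
  show "(\<lambda>\<omega>. real (X n \<omega>) * lost n \<omega>) \<in> borel_measurable M"
    using borel_measurable_pair_fun[of "\<lambda>x s. real x * (if s \<le> x then 0 else 1)" n]
    by (simp only: lost_def)
  show "AE \<omega> in M. norm (real (X n \<omega>) * lost n \<omega>) \<le> norm (real (X n \<omega>))"
    by (intro AE_I2) (simp add: lost_def)
qed

lemma integral_X_lost_bounds: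
  "0 \<le> (\<integral>\<omega>. real (X n \<omega>) * lost n \<omega> \<partial>M)" "(\<integral>\<omega>. real (X n \<omega>) * lost n \<omega> \<partial>M) \<le> mx"
proof -
  show "0 \<le> (\<integral>\<omega>. real (X n \<omega>) * lost n \<omega> \<partial>M)"
    by (intro integral_nonneg_AE AE_I2) (simp add: lost_def)
  have "(\<integral>\<omega>. real (X n \<omega>) * lost n \<omega> \<partial>M) \<le> (\<integral>\<omega>. real (X n \<omega>) \<partial>M)"
    using integrable_X_lost integrable_X by (rule integral_mono) (simp add: lost_def)
  then show "(\<integral>\<omega>. real (X n \<omega>) * lost n \<omega> \<partial>M) \<le> mx" by (simp only: integral_X)
qed

lemma integral_gen_age_rv_Suc:
  "(\<integral>\<omega>. gen_age_rv (Suc n) \<omega> \<partial>M) = mx + (\<integral>\<omega>. gen_age_rv n \<omega> \<partial>M) * (1 - p)"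
proof -
  note indep =
      integral_gen_age_mult_pair_fun[where G = "\<lambda>x. x" and F = "\<lambda>x s. if s \<le> x then 0 else 1",
      of n, folded lost_def, OF integrable_gen_age_rv integrable_lost]
  have "(\<integral>\<omega>. gen_age_rv (Suc n) \<omega> \<partial>M) = (\<integral>\<omega>. real (X n \<omega>) + gen_age_rv n \<omega> * lost n \<omega> \<partial>M)"
    by (simp only: gen_age_rv_Suc)
  also have "\<dots> = mx + (\<integral>\<omega>. gen_age_rv n \<omega> \<partial>M) * (1 - p)"
    using integrable_X[of n] indep by (simp add: integral_X integral_lost)
  finally show ?thesis .
qed

lemma integral_gen_age_rv_sq_Suc:
  "(\<integral>\<omega>. (gen_age_rv (Suc n) \<omega>)\<^sup>2 \<partial>M)
     = m2 + 2 * ((\<integral>\<omega>. gen_age_rv n \<omega> \<partial>M) * (\<integral>\<omega>. real (X n \<omega>) * lost n \<omega> \<partial>M))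
       + (\<integral>\<omega>. (gen_age_rv n \<omega>)\<^sup>2 \<partial>M) * (1 - p)"
proof -
  note cross =
      integral_gen_age_mult_pair_fun[where G = "\<lambda>x. x" and F =
          "\<lambda>x s. real x * (if s \<le> x then 0 else 1)",
      of n, folded lost_def, OF integrable_gen_age_rv integrable_X_lost]
  note sq = integral_gen_age_mult_pair_fun[where G = "\<lambda>x. x\<^sup>2" and F =
      "\<lambda>x s. if s \<le> x then 0 else 1",
      of n, folded lost_def, OF integrable_gen_age_rv_sq integrable_lost]
  have "(gen_age_rv (Suc n) \<omega>)\<^sup>2 = (real (X n \<omega>))\<^sup>2 + 2 *
      (gen_age_rv n \<omega> * (real (X n \<omega>) * lost n \<omega>))
          + (gen_age_rv n \<omega>)\<^sup>2 * lost n \<omega>" for \<omega>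
    by (simp add: gen_age_rv_Suc lost_def power2_eq_square algebra_simps)
  then have "(\<integral>\<omega>. (gen_age_rv (Suc n) \<omega>)\<^sup>2 \<partial>M)
      = (\<integral>\<omega>. (real (X n \<omega>))\<^sup>2 + 2 * (gen_age_rv n \<omega> * (real (X n \<omega>) * lost n \<omega>))
          + (gen_age_rv n \<omega>)\<^sup>2 * lost n \<omega> \<partial>M)"
    by (simp only:)
  also have "\<dots> = m2 + 2 * ((\<integral>\<omega>. gen_age_rv n \<omega> \<partial>M) * (\<integral>\<omega>. real (X n \<omega>) * lost n \<omega> \<partial>M))
      + (\<integral>\<omega>. (gen_age_rv n \<omega>)\<^sup>2 \<partial>M) * (1 - p)"
    using integrable_X_sq[of n] cross sq by (simp add: integral_X_sq integral_lost)
  finally show ?thesis .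
qed

text \<open>The first two moments obey affine recursions with contraction factor 1 - p.\<close>
lemma bounded_gen_age_rv_sq_moment: "\<exists>B. \<forall>n. (\<integral>\<omega>. (gen_age_rv n \<omega>)\<^sup>2 \<partial>M) \<le> B"
proof -
  define A where "A = max 1 (mx / p)"
  have EA: "(\<integral>\<omega>. gen_age_rv n \<omega> \<partial>M) \<le> A" for n
  proof (rule
      le_of_affine_recursion[where u = "\<lambda>n. \<integral>\<omega>. gen_age_rv n \<omega> \<partial>M" and b = mx and q = "1 - p"])
    have "mx / p \<le> A" by (simp add: A_def)
    then have "mx \<le> A * p" using p_pos by (simp add: pos_divide_le_eq)
    then show "mx + A * (1 - p) \<le> A" by (simp add: algebra_simps)
  qed (use p_le_1 in \<open>simp_all add: integral_gen_age_rv_Suc gen_age_rv_0 prob_space A_def\<close>)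
  have EA_nonneg: "0 \<le> (\<integral>\<omega>. gen_age_rv n \<omega> \<partial>M)" for n
    using gen_age_rv_ge_1
    by (intro integral_nonneg_AE AE_I2) (auto intro: order_trans[OF zero_le_one])
  define B where "B = max 1 ((m2 + 2 * A * mx) / p)"
  have "(\<integral>\<omega>. (gen_age_rv n \<omega>)\<^sup>2 \<partial>M) \<le> B" for n
  proof (rule le_of_affine_recursion[where u = "\<lambda>n. \<integral>\<omega>. (gen_age_rv n \<omega>)\<^sup>2 \<partial>M"
        and b = "m2 + 2 * A * mx" and q = "1 - p"])
    show "(\<integral>\<omega>. (gen_age_rv (Suc n) \<omega>)\<^sup>2 \<partial>M) \<le> m2 + 2 * A * mx + (\<integral>\<omega>. (gen_age_rv n \<omega>)\<^sup>2 \<partial>M) *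
        (1 - p)"
      for n
    proof -
      have "(\<integral>\<omega>. gen_age_rv n \<omega> \<partial>M) * (\<integral>\<omega>. real (X n \<omega>) * lost n \<omega> \<partial>M) \<le> A * mx"
        using EA[of n] EA_nonneg[of n] integral_X_lost_bounds[of n] by (intro mult_mono) auto
      then show ?thesis unfolding integral_gen_age_rv_sq_Suc by simp
    qed
    have "(m2 + 2 * A * mx) / p \<le> B" by (simp add: B_def)
    then have "m2 + 2 * A * mx \<le> B * p" using p_pos by (simp add: pos_divide_le_eq)
    then show "m2 + 2 * A * mx + B * (1 - p) \<le> B" by (simp add: algebra_simps)
  qed (use p_le_1 in \<open>simp_all add: gen_age_rv_0 prob_space B_def\<close>)
  then show ?thesis by blast
qed

end

section \<open>Peak age\<close>

context lcfs_model
begin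

lemma AE_average_pair_fun_tendsto_of_le:
  fixes \<phi> :: "nat \<Rightarrow> nat \<Rightarrow> nat"
  assumes "integrable M (\<lambda>\<omega>. real (X 0 \<omega>))" and le: "\<And>x s. 1 \<le> x \<Longrightarrow> \<phi> x s \<le> x"
  shows "AE \<omega> in M. (\<lambda>n. (\<Sum>k<n. real (\<phi> (X k \<omega>) (S k \<omega>))) / real n)
                      \<longlonglongrightarrow> (\<integral>\<omega>. real (\<phi> (X 0 \<omega>) (S 0 \<omega>)) \<partial>M)"
proof (rule AE_average_pair_fun_tendsto)
  show "integrable M (\<lambda>\<omega>. real (\<phi> (X 0 \<omega>) (S 0 \<omega>)))"
  proof (rule Bochner_Integration.integrable_bound[OF assms(1)])
    show "(\<lambda>\<omega>. real (\<phi> (X 0 \<omega>) (S 0 \<omega>))) \<in> borel_measurable M"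
      using borel_measurable_pair_fun[of "\<lambda>x s. real (\<phi> x s)"] .
    show "AE \<omega> in M. norm (real (\<phi> (X 0 \<omega>) (S 0 \<omega>))) \<le> norm (real (X 0 \<omega>))"
      using le X_pos by (intro AE_I2) simp
  qed
qed

lemma AE_average_X_tendsto:
  assumes "integrable M (\<lambda>\<omega>. real (X 0 \<omega>))"
  shows "AE \<omega> in M. (\<lambda>n. (\<Sum>k<n. real (X k \<omega>)) / real n) \<longlonglongrightarrow> (\<integral>\<omega>. real (X 0 \<omega>) \<partial>M)"
  using AE_average_pair_fun_tendsto_of_le[OF assms, of "\<lambda>x s. x"] by simp

lemma AE_delivery_frequency_tendsto:
  assumes "integrable M (\<lambda>\<omega>. real (X 0 \<omega>))"
  shows "AE \<omega> in M. (\<lambda>n. (\<Sum>k<n. if S k \<omega> \<le> X k \<omega> then 1 else 0) / real n)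
                      \<longlonglongrightarrow> prob {\<omega>\<in>space M. S 0 \<omega> \<le> X 0 \<omega>}"
proof -
  have "AE \<omega> in M. (\<lambda>n. (\<Sum>k<n. real (if S k \<omega> \<le> X k \<omega> then 1 else 0)) / real n)
      \<longlonglongrightarrow> (\<integral>\<omega>. real (if S 0 \<omega> \<le> X 0 \<omega> then 1 else 0) \<partial>M)"
    by (rule AE_average_pair_fun_tendsto_of_le[OF assms]) simp
  moreover have "real (if c then 1 else 0) = (if c then 1 else 0)" for c by simp
  ultimately show ?thesis by (simp only: integral_delivered)
qed

lemma AE_average_delivered_service_tendsto:
  assumes "integrable M (\<lambda>\<omega>. real (X 0 \<omega>))"
  shows "AE \<omega> in M. (\<lambda>n. (\<Sum>k<n. if S k \<omega> \<le> X k \<omega> then real (S k \<omega>) else 0) / real n)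
                      \<longlonglongrightarrow> (\<integral>\<omega>. (if S 0 \<omega> \<le> X 0 \<omega> then real (S 0 \<omega>) else 0) \<partial>M)"
proof -
  have "AE \<omega> in M. (\<lambda>n. (\<Sum>k<n. real (if S k \<omega> \<le> X k \<omega> then S k \<omega> else 0)) / real n)
      \<longlonglongrightarrow> (\<integral>\<omega>. real (if S 0 \<omega> \<le> X 0 \<omega> then S 0 \<omega> else 0) \<partial>M)"
    by (rule AE_average_pair_fun_tendsto_of_le[OF assms]) simp
  moreover have "real (if c then a else 0) = (if c then real a else 0)" for c a by simp
  ultimately show ?thesis by (simp only:)
qed

lemma AE_peak_age_eq:
  assumes X_int: "integrable M (\<lambda>\<omega>. real (X 0 \<omega>))"
    and pos: "prob {\<omega>\<in>space M. S 0 \<omega> \<le> X 0 \<omega>} > 0"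
  shows "AE \<omega> in M. peak_age (\<lambda>n. X n \<omega>) (\<lambda>n. S n \<omega>) =
           ereal ((\<integral>\<omega>. real (X 0 \<omega>) \<partial>M) / prob {\<omega>\<in>space M. S 0 \<omega> \<le> X 0 \<omega>}
                + (\<integral>\<omega>. (if S 0 \<omega> \<le> X 0 \<omega> then real (S 0 \<omega>) else 0) \<partial>M)
                    / prob {\<omega>\<in>space M. S 0 \<omega> \<le> X 0 \<omega>} - 1)"
  using AE_average_X_tendsto[OF X_int] AE_delivery_frequency_tendsto[OF X_int]
    AE_average_delivered_service_tendsto[OF X_int] AE_space
proof eventually_elim
  case (elim \<omega>)
  interpret sample_path "\<lambda>n. X n \<omega>" "\<lambda>n. S n \<omega>"
    using elim(4) X_pos S_pos by unfold_locales
  have "peak_ratio (\<lambda>n. X n \<omega>) (\<lambda>n. S n \<omega>) \<longlonglongrightarrow>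
      (\<integral>\<omega>. real (X 0 \<omega>) \<partial>M) / prob {\<omega>\<in>space M. S 0 \<omega> \<le> X 0 \<omega>}
      + (\<integral>\<omega>. (if S 0 \<omega> \<le> X 0 \<omega> then real (S 0 \<omega>) else 0) \<partial>M)
        / prob {\<omega>\<in>space M. S 0 \<omega> \<le> X 0 \<omega>} - 1"
    by (rule peak_ratio_tendsto_of_averages) (use elim(1-3) pos in simp_all)
  then show ?case unfolding peak_age_def by (rule limsup_ereal_eq_of_tendsto)
qed

end

section \<open>Weighted averages of the age at generation times\<close>

locale gen_age_weighting = lcfs_model_L2 +
  fixes F :: "nat \<Rightarrow> nat \<Rightarrow> real"
  assumes F_sq_integrable: "integrable M (\<lambda>\<omega>. (F (X 0 \<omega>) (S 0 \<omega>))\<^sup>2)"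
begin

definition c where "c = (\<integral>\<omega>. F (X 0 \<omega>) (S 0 \<omega>) \<partial>M)"

definition innovation where "innovation n \<omega> = gen_age_rv n \<omega> * (F (X n \<omega>) (S n \<omega>) - c)"

lemma integrable_F: "integrable M (\<lambda>\<omega>. F (X n \<omega>) (S n \<omega>))"
  using integrable_pair_fun_iff[of F n]
    square_integrable_imp_integrable[OF borel_measurable_pair_fun F_sq_integrable] by simp

lemma integral_centered_F: "(\<integral>\<omega>. F (X n \<omega>) (S n \<omega>) - c \<partial>M) = 0"
  using integrable_F integral_pair_fun_eq[of F n] by (simp add: c_def prob_space)

lemma integrable_centered_F_sq: "integrable M (\<lambda>\<omega>. (F (X n \<omega>) (S n \<omega>) - c)\<^sup>2)"
proof -
  have "integrable M (\<lambda>\<omega>. (F (X n \<omega>) (S n \<omega>))\<^sup>2 - 2 * c * F (X n \<omega>) (S n \<omega>) + c\<^sup>2)"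
    using integrable_pair_fun_iff[of "\<lambda>x s. (F x s)\<^sup>2" n] F_sq_integrable integrable_F by simp
  then show ?thesis by (simp add: power2_diff algebra_simps)
qed

lemma innovation_measurable [measurable]: "innovation n \<in> borel_measurable M"
  unfolding innovation_def by measurable

lemma integral_innovation_sq:
  "integrable M (\<lambda>\<omega>. (innovation n \<omega>)\<^sup>2)"
  "(\<integral>\<omega>. (innovation n \<omega>)\<^sup>2 \<partial>M)
     = (\<integral>\<omega>. (gen_age_rv n \<omega>)\<^sup>2 \<partial>M) * (\<integral>\<omega>. (F (X 0 \<omega>) (S 0 \<omega>) - c)\<^sup>2 \<partial>M)"
  using integral_gen_age_mult_pair_fun[where G = "\<lambda>x. x\<^sup>2" and F = "\<lambda>x s. (F x s - c)\<^sup>2", of n]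
    integrable_gen_age_rv_sq integrable_centered_F_sq
        integral_pair_fun_eq[of "\<lambda>x s. (F x s - c)\<^sup>2" n]
  by (simp_all add: innovation_def power_mult_distrib)

lemma integral_innovation_mult:
  assumes "n < m"
  shows "integrable M (\<lambda>\<omega>. innovation n \<omega> * innovation m \<omega>)"
    and "(\<integral>\<omega>. innovation n \<omega> * innovation m \<omega> \<partial>M) = 0"
proof -
  define \<Phi> where "\<Phi> z = gen_age_coords n z * (F (z (Inl n)) (z (Inr n)) - c) * gen_age_coords m z"
      for z
  define \<Psi> where "\<Psi> z = F (z (Inl m)) (z (Inr m)) - c" for z
  have "depends_on {..<m} (gen_age_coords n)"
    using assms by (intro depends_on_mono[OF _ depends_on_gen_age_coords]) auto
  moreover have "depends_on {..<m} (\<lambda>z. F (z (Inl n)) (z (Inr n)) - c)"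
    using assms depends_on_coord[of n "{..<m}" "\<lambda>x s. F x s - c"] by simp
  ultimately have "depends_on {..<m} (\<lambda>z. gen_age_coords n z * (F (z (Inl n)) (z (Inr n)) - c))"
    by (rule depends_on_comp2)
  from depends_on_comp2[OF this depends_on_gen_age_coords, of "\<lambda>x y. x * y"]
  have "depends_on {..<m} \<Phi>" by (simp add: \<Phi>_def[abs_def])
  moreover have "depends_on {m} \<Psi>"
    using depends_on_coord[of m "{m}" "\<lambda>x s. F x s - c"] by (simp add: \<Psi>_def[abs_def])
  moreover have "integrable M (\<lambda>\<omega>. \<Phi> (path \<omega>))"
  proof -
    have "integrable M (\<lambda>\<omega>. innovation n \<omega> * gen_age_rv m \<omega>)"
      using integral_innovation_sq(1) integrable_gen_age_rv_sq
      by (intro integrable_mult_of_square_integrable) measurable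
    then show ?thesis by (simp add: \<Phi>_def innovation_def gen_age_rv_path)
  qed
  moreover have "integrable M (\<lambda>\<omega>. \<Psi> (path \<omega>))"
    using integrable_F[of m] by (simp add: \<Psi>_def)
  ultimately have "integrable M (\<lambda>\<omega>. \<Phi> (path \<omega>) * \<Psi> (path \<omega>))"
    and "(\<integral>\<omega>. \<Phi> (path \<omega>) * \<Psi> (path \<omega>) \<partial>M) = (\<integral>\<omega>. \<Phi> (path \<omega>) \<partial>M) * (\<integral>\<omega>. \<Psi> (path \<omega>) \<partial>M)"
    using integral_mult_depends_on[of "{..<m}" "{m}"] by auto
  moreover have "\<Phi> (path \<omega>) * \<Psi> (path \<omega>) = innovation n \<omega> * innovation m \<omega>" for \<omega>
    by (simp add: \<Phi>_def \<Psi>_def innovation_def gen_age_rv_path mult_ac)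
  moreover have "(\<integral>\<omega>. \<Psi> (path \<omega>) \<partial>M) = 0"
    using integral_centered_F[of m] by (simp add: \<Psi>_def)
  ultimately show "integrable M (\<lambda>\<omega>. innovation n \<omega> * innovation m \<omega>)"
    and "(\<integral>\<omega>. innovation n \<omega> * innovation m \<omega> \<partial>M) = 0"
    by simp_all
qed

lemma AE_innovation_average_tendsto_geom_floor:
  assumes a: "a > 1"
  shows "AE \<omega> in M. (\<lambda>j. (\<Sum>n<geom_floor a j. innovation n \<omega>) / real (geom_floor a j)) \<longlonglongrightarrow> 0"
proof -
  obtain B where B: "\<And>n. (\<integral>\<omega>. (gen_age_rv n \<omega>)\<^sup>2 \<partial>M) \<le> B"
    using bounded_gen_age_rv_sq_moment by blast
  have "0 \<le> (\<integral>\<omega>. (gen_age_rv 0 \<omega>)\<^sup>2 \<partial>M)" by (intro integral_nonneg_AE AE_I2) simp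
  then have B_nonneg: "0 \<le> B" using B[of 0] by linarith
  define V where "V = (\<integral>\<omega>. (F (X 0 \<omega>) (S 0 \<omega>) - c)\<^sup>2 \<partial>M)"
  have V: "0 \<le> V" unfolding V_def by simp
  have prod_int: "integrable M (\<lambda>\<omega>. innovation i \<omega> * innovation j \<omega>)" for i j
    using integral_innovation_mult(1)[of i j] integral_innovation_mult(1)[of j i]
        integral_innovation_sq(1)[of i]
    by (cases i j rule: linorder_cases) (simp_all add: power2_eq_square mult.commute)
  have orth: "(\<integral>\<omega>. innovation i \<omega> * innovation j \<omega> \<partial>M) = 0" if "i \<noteq> j" for i j
    using that integral_innovation_mult(2)[of i j] integral_innovation_mult(2)[of j i]
    by (cases i j rule: linorder_cases) (simp_all add: mult.commute)
  note sum_sq = integral_sum_sq_of_orthogonal[OF prod_int orth]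
  show ?thesis
  proof (rule AE_tendsto_zero_of_summable_second_moments)
    show "integrable M (\<lambda>\<omega>. ((\<Sum>n<geom_floor a j. innovation n \<omega>) / real (geom_floor a j))\<^sup>2)" for j
      using sum_sq(1) by (simp add: power_divide)
    show "(\<integral>\<omega>. ((\<Sum>n<geom_floor a j. innovation n \<omega>) / real (geom_floor a j))\<^sup>2 \<partial>M)
        \<le> 2 * (B * V) * (1 / a) ^ j" for j
    proof -
      let ?k = "real (geom_floor a j)"
      have k1: "1 \<le> ?k" using geom_floor_ge_1[OF a, of j] by simp
      have "(\<integral>\<omega>. ((\<Sum>n<geom_floor a j. innovation n \<omega>) / ?k)\<^sup>2 \<partial>M)
          = (\<Sum>n<geom_floor a j. \<integral>\<omega>. (innovation n \<omega>)\<^sup>2 \<partial>M) / ?k\<^sup>2"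
        by (simp add: power_divide sum_sq(2))
      also have "\<dots> \<le> (\<Sum>n<geom_floor a j. B * V) / ?k\<^sup>2"
        unfolding integral_innovation_sq(2) V_def[symmetric]
        using B V by (intro divide_right_mono sum_mono mult_right_mono) auto
      also have "\<dots> = (B * V) * (1 / ?k)" using k1 by (simp add: power2_eq_square)
      also have "\<dots> \<le> (B * V) * (2 * (1 / a) ^ j)"
        using inverse_geom_floor_le[OF a] B_nonneg V by (intro mult_left_mono) auto
      finally show ?thesis by simp
    qed
    show "summable (\<lambda>j. 2 * (B * V) * (1 / a) ^ j)"
      using a by (intro summable_mult summable_geometric) auto
  qed measurable
qed

end

section \<open>Average age\<close>

context gen_age_weighting
begin

lemma sum_weighted_gen_age_rv:
  "(\<Sum>n<N. gen_age_rv n \<omega> * F (X n \<omega>) (S n \<omega>)) = (\<Sum>n<N. innovation n \<omega>) + c * (\<Sum>n<N. gen_age_rv n \<omega>)"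
  by (simp add: innovation_def sum_distrib_left algebra_simps flip: sum.distrib)

lemma AE_innovation_average_tendsto_all_geom_floor:
  "AE \<omega> in M. \<forall>m. (\<lambda>j. (\<Sum>n<geom_floor (1 + 1 / real (Suc m)) j. innovation n \<omega>)
                            / real (geom_floor (1 + 1 / real (Suc m)) j)) \<longlonglongrightarrow> 0"
  by (subst AE_all_countable) (auto intro: AE_innovation_average_tendsto_geom_floor)

lemma AE_weighted_average_tendsto:
  assumes F_nonneg: "\<And>x s. 0 \<le> F x s"
    and lim: "AE \<omega> in M. (\<lambda>N. (\<Sum>n<N. gen_age_rv n \<omega>) / real N) \<longlonglongrightarrow> \<alpha>"
  shows "AE \<omega> in M. (\<lambda>N. (\<Sum>n<N. gen_age_rv n \<omega> * F (X n \<omega>) (S n \<omega>)) / real N) \<longlonglongrightarrow> c * \<alpha>"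
  using AE_innovation_average_tendsto_all_geom_floor lim AE_space
proof eventually_elim
  case (elim \<omega>)
  have A_nonneg: "0 \<le> gen_age_rv n \<omega>" for n using gen_age_rv_ge_1[OF elim(3)]
    by (rule order_trans[rotated]) simp
  show ?case
  proof (rule mono_ratio_tendsto_of_geom_floor)
    show "mono (\<lambda>N. \<Sum>n<N. gen_age_rv n \<omega> * F (X n \<omega>) (S n \<omega>))"
      using A_nonneg F_nonneg by (intro monoI sum_mono2) auto
    show "0 \<le> (\<Sum>n<N. gen_age_rv n \<omega> * F (X n \<omega>) (S n \<omega>))" for N
      using A_nonneg F_nonneg by (intro sum_nonneg) auto
    fix m
    let ?k = "geom_floor (1 + 1 / real (Suc m))"
    have "(\<lambda>j. (\<Sum>n<?k j. innovation n \<omega>) / real (?k j) + c *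
        ((\<Sum>n<?k j. gen_age_rv n \<omega>) / real (?k j)))
        \<longlonglongrightarrow> 0 + c * \<alpha>"
      using elim(1) filterlim_compose[OF elim(2) filterlim_geom_floor[of "1 + 1 / real (Suc m)"]]
      by (intro tendsto_intros) auto
    then show "(\<lambda>j. (\<Sum>n<?k j. gen_age_rv n \<omega> * F (X n \<omega>) (S n \<omega>)) / real (?k j)) \<longlonglongrightarrow> c * \<alpha>"
      by (simp add: sum_weighted_gen_age_rv add_divide_distrib)
  qed
qed

lemma AE_average_tendsto_of_weighted:
  assumes c: "c \<noteq> 0"
    and lim: "AE \<omega> in M. (\<lambda>N. (\<Sum>n<N. gen_age_rv n \<omega> * F (X n \<omega>) (S n \<omega>)) / real N) \<longlonglongrightarrow> \<beta>"
  shows "AE \<omega> in M. (\<lambda>N. (\<Sum>n<N. gen_age_rv n \<omega>) / real N) \<longlonglongrightarrow> \<beta> / c"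
  using AE_innovation_average_tendsto_all_geom_floor lim AE_space
proof eventually_elim
  case (elim \<omega>)
  have A_nonneg: "0 \<le> gen_age_rv n \<omega>" for n using gen_age_rv_ge_1[OF elim(3)]
    by (rule order_trans[rotated]) simp
  show ?case
  proof (rule mono_ratio_tendsto_of_geom_floor)
    show "mono (\<lambda>N. \<Sum>n<N. gen_age_rv n \<omega>)" using A_nonneg by (intro monoI sum_mono2) auto
    show "0 \<le> (\<Sum>n<N. gen_age_rv n \<omega>)" for N using A_nonneg by (intro sum_nonneg) auto
    fix m
    let ?k = "geom_floor (1 + 1 / real (Suc m))"
    have "(\<lambda>j. ((\<Sum>n<?k j. gen_age_rv n \<omega> * F (X n \<omega>) (S n \<omega>)) / real (?k j)
               - (\<Sum>n<?k j. innovation n \<omega>) / real (?k j)) / c) \<longlonglongrightarrow> (\<beta> - 0) / c"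
      using elim(1) filterlim_compose[OF elim(2) filterlim_geom_floor[of "1 + 1 / real (Suc m)"]] c
      by (intro tendsto_intros) auto
    moreover have "((\<Sum>n<?k j. gen_age_rv n \<omega> * F (X n \<omega>) (S n \<omega>)) / real (?k j)
               - (\<Sum>n<?k j. innovation n \<omega>) / real (?k j)) / c = (\<Sum>n<?k j. gen_age_rv n \<omega>) / real
                   (?k j)" for j
    proof -
      have "(\<Sum>n<?k j. gen_age_rv n \<omega> * F (X n \<omega>) (S n \<omega>)) / real (?k j)
          - (\<Sum>n<?k j. innovation n \<omega>) / real (?k j) = c * ((\<Sum>n<?k j. gen_age_rv n \<omega>) / real (?k j))"
        by (simp add: sum_weighted_gen_age_rv add_divide_distrib)
      then show ?thesis using c by simp
    qed
    ultimately show "(\<lambda>j. (\<Sum>n<?k j. gen_age_rv n \<omega>) / real (?k j)) \<longlonglongrightarrow> \<beta> / c"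
      by simp
  qed
qed

end

context lcfs_model_L2
begin

definition mm where "mm = (\<integral>\<omega>. real (min (X 0 \<omega>) (S 0 \<omega>)) \<partial>M)"

lemma AE_gen_age_rv_over_n_tendsto: "AE \<omega> in M. (\<lambda>N. gen_age_rv N \<omega> / real N) \<longlonglongrightarrow> 0"
proof -
  obtain B where B: "\<And>n. (\<integral>\<omega>. (gen_age_rv n \<omega>)\<^sup>2 \<partial>M) \<le> B"
    using bounded_gen_age_rv_sq_moment by blast
  show ?thesis
  proof (rule AE_tendsto_zero_of_summable_second_moments[where g = "\<lambda>N. B * inverse (real N ^ 2)"])
    show "integrable M (\<lambda>\<omega>. (gen_age_rv N \<omega> / real N)\<^sup>2)" for N
      using integrable_gen_age_rv_sq[of N] by (simp add: power_divide)
    show "(\<integral>\<omega>. (gen_age_rv N \<omega> / real N)\<^sup>2 \<partial>M) \<le> B * inverse (real N ^ 2)" for N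
    proof -
      have "(\<integral>\<omega>. (gen_age_rv N \<omega> / real N)\<^sup>2 \<partial>M) = (\<integral>\<omega>. (gen_age_rv N \<omega>)\<^sup>2 \<partial>M) / (real N)\<^sup>2"
        by (simp add: power_divide)
      also have "\<dots> \<le> B / (real N)\<^sup>2" using B[of N] by (rule divide_right_mono) simp
      finally show ?thesis by (simp add: divide_inverse)
    qed
    show "summable (\<lambda>N. B * inverse (real N ^ 2))"
      by (intro summable_mult inverse_power_summable) simp
  qed measurable
qed

text \<open>Each delivery resets the age at generation, so the weighted sum telescopes.\<close>
lemma sum_gen_age_rv_delivered:
  "(\<Sum>n<N. gen_age_rv n \<omega> * (if S n \<omega> \<le> X n \<omega> then 1 else 0))
     = (\<Sum>n<N. real (X n \<omega>)) + 1 - gen_age_rv N \<omega>"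
proof -
  have "(\<Sum>n<N. gen_age_rv n \<omega> * (if S n \<omega> \<le> X n \<omega> then 1 else 0))
      = (\<Sum>n<N. real (X n \<omega>) + (gen_age_rv n \<omega> - gen_age_rv (Suc n) \<omega>))"
    by (rule sum.cong) (auto simp: gen_age_rv_Suc lost_def)
  then show ?thesis
    by (simp add: sum.distrib sum_lessThan_telescope'[of "\<lambda>n. gen_age_rv n \<omega>"] gen_age_rv_0)
qed

lemma AE_average_gen_age_rv_tendsto:
  "AE \<omega> in M. (\<lambda>N. (\<Sum>n<N. gen_age_rv n \<omega>) / real N) \<longlonglongrightarrow> mx / p"
proof -
  interpret W: gen_age_weighting M X S "\<lambda>x s. if s \<le> x then 1 else 0"
    by unfold_locales (rule integrable_const_bound[where B = 1], auto)
  have c: "W.c = p" unfolding W.c_def p_def by (rule integral_delivered)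
  have "AE \<omega> in M. (\<lambda>N. (\<Sum>n<N. gen_age_rv n \<omega> * (if S n \<omega> \<le> X n \<omega> then 1 else 0)) / real N) \<longlonglongrightarrow> mx"
    using AE_average_X_tendsto[OF integrable_X, folded mx_def] AE_gen_age_rv_over_n_tendsto
  proof eventually_elim
    case (elim \<omega>)
    have "(\<lambda>N. (\<Sum>n<N. real (X n \<omega>)) / real N + 1 / real N - gen_age_rv N \<omega> / real N) \<longlonglongrightarrow> mx + 0 - 0"
      by (intro tendsto_intros elim)
    then show ?case
      by (simp add: sum_gen_age_rv_delivered add_divide_distrib diff_divide_distrib)
  qed
  then show ?thesis using W.AE_average_tendsto_of_weighted p_pos by (simp add: c)
qed

lemma AE_average_gen_age_rv_min_tendsto:
  "AE \<omega> in M. (\<lambda>N. (\<Sum>n<N. gen_age_rv n \<omega> * real (min (X n \<omega>) (S n \<omega>))) / real N)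
                 \<longlonglongrightarrow> mm * (mx / p)"
proof -
  interpret W: gen_age_weighting M X S "\<lambda>x s. real (min x s)"
  proof
    show "integrable M (\<lambda>\<omega>. (real (min (X 0 \<omega>) (S 0 \<omega>)))\<^sup>2)"
      by (rule Bochner_Integration.integrable_bound[OF X_sq_integrable]) (auto intro!: power_mono)
  qed
  have "W.c = mm" unfolding W.c_def mm_def ..
  then show ?thesis using W.AE_weighted_average_tendsto[OF _ AE_average_gen_age_rv_tendsto] by simp
qed

lemma AE_average_age_eq:
  "AE \<omega> in M. average_age (\<lambda>n. X n \<omega>) (\<lambda>n. S n \<omega>) = ereal (1/2 * (m2 / mx) + mm / p - 1/2)"
proof -
  have mx: "1 \<le> mx"
    unfolding mx_def using integral_mono[OF _ integrable_X, of "\<lambda>_. 1"] X_pos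
    by (simp add: prob_space)
  have "AE \<omega> in M. (\<lambda>n. (\<Sum>k<n. (real (X k \<omega>))\<^sup>2) / real n) \<longlonglongrightarrow> m2"
    using AE_average_pair_fun_tendsto[of "\<lambda>x s. x * x"] X_sq_integrable
    by (simp add: m2_def power2_eq_square)
  then show ?thesis
    using AE_average_X_tendsto[OF integrable_X, folded mx_def] AE_average_gen_age_rv_min_tendsto AE_space
  proof eventually_elim
    case (elim \<omega>)
    interpret sample_path "\<lambda>n. X n \<omega>" "\<lambda>n. S n \<omega>"
      using elim(4) X_pos S_pos by unfold_locales
    let ?avg = "\<lambda>f N. (\<Sum>k<N. f k) / real N"
    have block: "block_area n = (real (X n \<omega>))\<^sup>2 / 2 - real (X n \<omega>) / 2
                                + gen_age_rv n \<omega> * real (min (X n \<omega>) (S n \<omega>))" for n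
      by (simp add: block_area_def gen_age_rv_def power2_eq_square right_diff_distrib
          diff_divide_distrib)
    have "(\<lambda>N. ?avg (\<lambda>k. (real (X k \<omega>))\<^sup>2) N / 2 - ?avg (\<lambda>k. real (X k \<omega>)) N / 2
               + ?avg (\<lambda>n. gen_age_rv n \<omega> * real (min (X n \<omega>) (S n \<omega>))) N)
          \<longlonglongrightarrow> m2 / 2 - mx / 2 + mm * (mx / p)"
      using elim(1-3) by (intro tendsto_intros) simp_all
    moreover have "?avg (\<lambda>k. (real (X k \<omega>))\<^sup>2) N / 2 - ?avg (\<lambda>k. real (X k \<omega>)) N / 2
        + ?avg (\<lambda>n. gen_age_rv n \<omega> * real (min (X n \<omega>) (S n \<omega>))) N = ?avg block_area N" for N
      by (cases "N = 0")
          (simp_all add: block sum.distrib sum_subtractf sum_distrib_left field_simps flip: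
              sum_divide_distrib)
    ultimately have "(\<lambda>T. age_area T / real T) \<longlonglongrightarrow> (m2 / 2 - mx / 2 + mm * (mx / p)) / mx"
      using elim(2) mx by (intro age_area_ratio_tendsto_of_averages) auto
    then have "average_age (\<lambda>n. X n \<omega>) (\<lambda>n. S n \<omega>) = ereal ((m2 / 2 - mx / 2 + mm * (mx / p)) / mx)"
      unfolding average_age_def age_area_def by (rule limsup_ereal_eq_of_tendsto)
    moreover have "(m2 / 2 - mx / 2 + mm * (mx / p)) / mx = 1/2 * (m2 / mx) + mm / p - 1/2"
      using mx p_pos by (simp add: field_simps)
    ultimately show ?case by simp
  qed
qed

end

lemma (in lcfs_model) AE_average_age_eq_of_L2:
  assumes "integrable M (\<lambda>\<omega>. (real (X 0 \<omega>))\<^sup>2)" and "prob {\<omega>\<in>space M. S 0 \<omega> \<le> X 0 \<omega>} > 0"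
  shows "AE \<omega> in M. average_age (\<lambda>n. X n \<omega>) (\<lambda>n. S n \<omega>) =
           ereal (1/2 * ((\<integral>\<omega>. (real (X 0 \<omega>))\<^sup>2 \<partial>M) / (\<integral>\<omega>. real (X 0 \<omega>) \<partial>M))
                + (\<integral>\<omega>. real (min (X 0 \<omega>) (S 0 \<omega>)) \<partial>M) / prob {\<omega>\<in>space M. S 0 \<omega> \<le> X 0 \<omega>} - 1/2)"
proof -
  interpret lcfs_model_L2 M X S using assms by unfold_locales
  show ?thesis using AE_average_age_eq by (simp add: m2_def mx_def mm_def p_def)
qed

theorem theorem3:
  fixes M :: "'a measure" and X S :: "nat \<Rightarrow> 'a \<Rightarrow> nat"
  assumes "prob_space M"
    and indep: "prob_space.indep_vars M (\<lambda>_. count_space UNIV)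
                  (\<lambda>j. case j of Inl n \<Rightarrow> X n | Inr n \<Rightarrow> S n) UNIV"
    and X_id: "\<And>n. distr M (count_space UNIV) (X n) = distr M (count_space UNIV) (X 0)"
    and S_id: "\<And>n. distr M (count_space UNIV) (S n) = distr M (count_space UNIV) (S 0)"
    and X_pos: "\<And>n \<omega>. \<omega> \<in> space M \<Longrightarrow> X n \<omega> \<ge> 1"
    and S_pos: "\<And>n \<omega>. \<omega> \<in> space M \<Longrightarrow> S n \<omega> \<ge> 1"
    and pos: "measure M {\<omega> \<in> space M. S 0 \<omega> \<le> X 0 \<omega>} > 0"
  shows
   "(integrable M (\<lambda>\<omega>. real (X 0 \<omega>)) \<longrightarrow>
      (AE \<omega> in M. peak_age (\<lambda>n. X n \<omega>) (\<lambda>n. S n \<omega>) =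
         ereal ((\<integral>\<omega>. real (X 0 \<omega>) \<partial>M) / measure M {\<omega> \<in> space M. S 0 \<omega> \<le> X 0 \<omega>}
              + (\<integral>\<omega>. (if S 0 \<omega> \<le> X 0 \<omega> then real (S 0 \<omega>) else 0) \<partial>M)
                  / measure M {\<omega> \<in> space M. S 0 \<omega> \<le> X 0 \<omega>}
              - 1)))
  \<and> (integrable M (\<lambda>\<omega>. real (X 0 \<omega>) ^ 2) \<longrightarrow>
      (AE \<omega> in M. average_age (\<lambda>n. X n \<omega>) (\<lambda>n. S n \<omega>) =
         ereal (1/2 * ((\<integral>\<omega>. real (X 0 \<omega>) ^ 2 \<partial>M) / (\<integral>\<omega>. real (X 0 \<omega>) \<partial>M))
              + (\<integral>\<omega>. real (min (X 0 \<omega>) (S 0 \<omega>)) \<partial>M)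
                  / measure M {\<omega> \<in> space M. S 0 \<omega> \<le> X 0 \<omega>}
              - 1/2)))"
proof -
  interpret lcfs_model M X S
    by (rule lcfs_model.intro[OF assms(1)], unfold_locales) (use assms in auto)
  show ?thesis
    using AE_peak_age_eq[OF _ pos] AE_average_age_eq_of_L2[OF _ pos] by simp
qed

end
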